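(* Let $S$ be a finite-dimensional quantum system, $H$ a Hermitian operator on $S$, $\beta>0$, $\Gamma=e^{-\beta H}/\operatorname{Tr}e^{-\beta H}$, and $\Phi$ a CPTP map on $S$ with trace-dual $\Phi^\dagger$. Let $\Delta_{\mathrm{drop}}:=\operatorname{Tr}[\Gamma H]-\operatorname{Tr}[\Phi(\Gamma)H]$ and $\gamma:=\Phi^\dagger(\Gamma)/\operatorname{Tr}[\Phi^\dagger(\Gamma)]$. Then $$\Delta_{\mathrm{drop}}\le-\beta^{-1}D(\Gamma\|\Phi^\dagger(\Gamma))=\beta^{-1}\{\ln\operatorname{Tr}[\Phi^\dagger(\Gamma)]-D(\Gamma\|\gamma)\}\le\beta^{-1}\ln\operatorname{Tr}[\Phi^\dagger(\Gamma)].$$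
   Context: The trace-dual $\Phi^\dagger$ satisfies $\operatorname{Tr}[\Phi(X)Y]=\operatorname{Tr}[X\Phi^\dagger(Y)]$ for all $X,Y$. For positive semidefinite $X\neq0$ and $Y$, $D(X\|Y):=\operatorname{Tr}[X]^{-1}\operatorname{Tr}[X\ln X-X\ln Y]$ if $\operatorname{supp}X\subseteq\operatorname{supp}Y$, and $+\infty$ otherwise. *)

theory Defs
  imports Complex_Main "Jordan_Normal_Form.Matrix" "HOL-Library.Extended_Real"
begin

definition mtr :: "complex mat \<Rightarrow> complex" where
  "mtr A = (\<Sum>i<dim_row A. A $$ (i, i))"

definition adj :: "complex mat \<Rightarrow> complex mat" where
  "adj A = mat (dim_col A) (dim_row A) (\<lambda>(i, j). cnj (A $$ (j, i)))"

definition cinner :: "complex vec \<Rightarrow> complex vec \<Rightarrow> complex" where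
  "cinner v w = (\<Sum>i<dim_vec v. cnj (v $ i) * w $ i)"

definition hermitian :: "nat \<Rightarrow> complex mat \<Rightarrow> bool" where
  "hermitian n A \<longleftrightarrow> A \<in> carrier_mat n n \<and> adj A = A"

definition unitary :: "nat \<Rightarrow> complex mat \<Rightarrow> bool" where
  "unitary n U \<longleftrightarrow> U \<in> carrier_mat n n \<and> U * adj U = 1\<^sub>m n \<and> adj U * U = 1\<^sub>m n"

definition psd :: "nat \<Rightarrow> complex mat \<Rightarrow> bool" where
  "psd n A \<longleftrightarrow> hermitian n A \<and> (\<forall>v \<in> carrier_vec n. 0 \<le> Re (cinner v (A *\<^sub>v v)))"

definition rdiag :: "real list \<Rightarrow> complex mat" where
  "rdiag ls = mat (length ls) (length ls) (\<lambda>(i, j). if i = j then complex_of_real (ls ! i) else 0)"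

text \<open>Functional calculus for Hermitian matrices via a spectral decomposition
  A = U diag(lambda) U^*; f(A) = U diag(f lambda) U^* (independent of the choice).\<close>
definition mat_fun :: "(real \<Rightarrow> real) \<Rightarrow> complex mat \<Rightarrow> complex mat" where
  "mat_fun f A = (SOME B. \<exists>U ls. unitary (dim_row A) U \<and> length ls = dim_row A \<and>
      A = U * rdiag ls * adj U \<and> B = U * rdiag (map f ls) * adj U)"

text \<open>Matrix logarithm of a PSD matrix, taken on its support (eigenvalue 0 mapped to 0);
  with supp X \<subseteq> supp Y this gives the usual values of Tr[X ln X] and Tr[X ln Y].\<close>
definition mat_ln :: "complex mat \<Rightarrow> complex mat" where
  "mat_ln A = mat_fun (\<lambda>x. if 0 < x then ln x else 0) A"

definition supp :: "complex mat \<Rightarrow> complex vec set" where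
  "supp A = {A *\<^sub>v v | v. v \<in> carrier_vec (dim_col A)}"

definition rel_ent :: "complex mat \<Rightarrow> complex mat \<Rightarrow> ereal" where
  "rel_ent X Y = (if supp X \<subseteq> supp Y
     then ereal (Re (mtr (X * mat_ln X - X * mat_ln Y) / mtr X)) else \<infinity>)"

definition linear_map :: "nat \<Rightarrow> (complex mat \<Rightarrow> complex mat) \<Rightarrow> bool" where
  "linear_map n \<Phi> \<longleftrightarrow> (\<forall>X \<in> carrier_mat n n. \<Phi> X \<in> carrier_mat n n) \<and>
     (\<forall>X \<in> carrier_mat n n. \<forall>Y \<in> carrier_mat n n. \<Phi> (X + Y) = \<Phi> X + \<Phi> Y) \<and>
     (\<forall>X \<in> carrier_mat n n. \<forall>c. \<Phi> (c \<cdot>\<^sub>m X) = c \<cdot>\<^sub>m \<Phi> X)"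

text \<open>(id_k \<otimes> \<Phi>) acting on a kn x kn matrix viewed as a k x k block matrix of n x n blocks.\<close>
definition ampliate :: "nat \<Rightarrow> nat \<Rightarrow> (complex mat \<Rightarrow> complex mat) \<Rightarrow> complex mat \<Rightarrow> complex mat" where
  "ampliate k n \<Phi> M = mat (k * n) (k * n) (\<lambda>(i, j).
     \<Phi> (mat n n (\<lambda>(a, b). M $$ ((i div n) * n + a, (j div n) * n + b))) $$ (i mod n, j mod n))"

definition completely_positive :: "nat \<Rightarrow> (complex mat \<Rightarrow> complex mat) \<Rightarrow> bool" where
  "completely_positive n \<Phi> \<longleftrightarrow>
     (\<forall>k \<ge> 1. \<forall>M. psd (k * n) M \<longrightarrow> psd (k * n) (ampliate k n \<Phi> M))"

definition trace_preserving :: "nat \<Rightarrow> (complex mat \<Rightarrow> complex mat) \<Rightarrow> bool" where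
  "trace_preserving n \<Phi> \<longleftrightarrow> (\<forall>X \<in> carrier_mat n n. mtr (\<Phi> X) = mtr X)"

definition cptp :: "nat \<Rightarrow> (complex mat \<Rightarrow> complex mat) \<Rightarrow> bool" where
  "cptp n \<Phi> \<longleftrightarrow> linear_map n \<Phi> \<and> completely_positive n \<Phi> \<and> trace_preserving n \<Phi>"

definition trace_dual :: "nat \<Rightarrow> (complex mat \<Rightarrow> complex mat) \<Rightarrow> (complex mat \<Rightarrow> complex mat) \<Rightarrow> bool" where
  "trace_dual n \<Phi> \<Psi> \<longleftrightarrow> (\<forall>Y \<in> carrier_mat n n. \<Psi> Y \<in> carrier_mat n n) \<and>
     (\<forall>X \<in> carrier_mat n n. \<forall>Y \<in> carrier_mat n n. mtr (\<Phi> X * Y) = mtr (X * \<Psi> Y))"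

end

theory Submission
  imports Defs "Jordan_Normal_Form.Spectral_Radius"
begin

(* Diagonalise Gamma = sum_a p_a |u_a><u_a| and sigma = Phi^dagger(Gamma) = sum_b s_b |v_b><v_b|.
   As ln Gamma = -beta H - ln Z and Phi preserves traces, the energy drop equals
   (Tr[Phi(Gamma) ln Gamma] - Tr[Gamma ln Gamma]) / beta, so the first inequality says
   Tr[Phi(Gamma) ln Gamma] <= Tr[Gamma ln sigma]. Interpolating, Tr[Phi(Gamma) ln(t Gamma + 1 - t)]
   and Tr[Gamma ln(t sigma + 1 - t)] both vanish at t = 0, and the derivative of their difference
   is nonnegative by the Choi-type inequality Tr[Gamma Phi^dagger(X)^-1] <= Tr[Phi(Gamma) X^-1]
   for X = t Gamma + 1 - t, which comes from the positivity of Phi((x W - 1) Gamma (x W - 1))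
   with W = Phi^dagger(X)^-1.
   The equality is D(Gamma||c sigma) = D(Gamma||sigma) - ln c, and the last inequality is Klein's
   inequality D(Gamma||gamma) >= 0, obtained from ln x <= x - 1 and the double stochasticity of
   |<u_a, v_b>|^2. Trace preservation makes sigma positive definite, so all logarithms are of
   positive numbers. *)

section \<open>Adjoints, traces and inner products\<close>

lemmas mat_sum_simps = scalar_prod_def row_def col_def atLeast0LessThan

lemma index_mult_mat_sum:
  "i < dim_row A \<Longrightarrow> j < dim_col B \<Longrightarrow> dim_col A = dim_row B \<Longrightarrow>
    (A * B) $$ (i, j) = (\<Sum>k<dim_col A. A $$ (i, k) * B $$ (k, j))"
  by (simp add: mat_sum_simps)

lemma adj_dims [simp]: "dim_row (adj A) = dim_col A" "dim_col (adj A) = dim_row A"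
  by (auto simp: adj_def)

lemma adj_entry [simp]: "i < dim_col A \<Longrightarrow> j < dim_row A \<Longrightarrow> adj A $$ (i, j) = cnj (A $$ (j, i))"
  by (auto simp: adj_def)

lemma adj_carrier [simp]: "A \<in> carrier_mat n m \<Longrightarrow> adj A \<in> carrier_mat m n"
  unfolding carrier_mat_def by simp

lemma adj_adj [simp]: "adj (adj A) = A"
  by (rule eq_matI) auto

lemma adj_mult:
  assumes "A \<in> carrier_mat n k" "B \<in> carrier_mat k m"
  shows "adj (A * B) = adj B * adj A"
proof (rule eq_matI)
  fix i j assume ij: "i < dim_row (adj B * adj A)" "j < dim_col (adj B * adj A)"
  have "adj (A * B) $$ (i, j) = cnj (\<Sum>l<k. A $$ (j, l) * B $$ (l, i))"
    using assms ij by (simp add: mat_sum_simps)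
  also have "\<dots> = (\<Sum>l<k. cnj (B $$ (l, i)) * cnj (A $$ (j, l)))"
    by (simp add: mult.commute)
  also have "\<dots> = (adj B * adj A) $$ (i, j)"
    using assms ij by (simp add: mat_sum_simps)
  finally show "adj (A * B) $$ (i, j) = (adj B * adj A) $$ (i, j)" .
qed (use assms in auto)

lemma adj_one [simp]: "adj (1\<^sub>m n) = 1\<^sub>m n"
  by (rule eq_matI) auto

lemma adj_smult: "adj (c \<cdot>\<^sub>m A) = cnj c \<cdot>\<^sub>m adj A"
  by (rule eq_matI) auto

lemma adj_add: "A \<in> carrier_mat n m \<Longrightarrow> B \<in> carrier_mat n m \<Longrightarrow> adj (A + B) = adj A + adj B"
  by (rule eq_matI) auto

lemma smult_smult_mat: "(a :: complex) \<cdot>\<^sub>m (b \<cdot>\<^sub>m A) = (a * b) \<cdot>\<^sub>m A"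
  by (rule eq_matI) auto

lemma one_smult_mat [simp]: "(1 :: complex) \<cdot>\<^sub>m A = A"
  by (rule eq_matI) auto

lemma mult_add_add_mat:
  assumes "A \<in> carrier_mat n n" "B \<in> carrier_mat n n" "C \<in> carrier_mat n n" "D \<in> carrier_mat n n"
  shows "((A :: complex mat) + B) * (C + D) = A * C + (A * D + (B * C + B * D))"
proof -
  have "(A + B) * (C + D) = (A * C + B * C) + (A * D + B * D)"
    using assms by (simp add: add_mult_distrib_mat[of _ n n] mult_add_distrib_mat[of _ n n _ n] del: assoc_add_mat)
  also have "\<dots> = A * C + (A * D + (B * C + B * D))"
    using assms by (intro eq_matI) auto
  finally show ?thesis .
qed

lemma mult_square_carrier: "A \<in> carrier_mat n n \<Longrightarrow> B \<in> carrier_mat n n \<Longrightarrow> A * B \<in> carrier_mat n n"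
  by simp

lemma mtr_mult_comm:
  assumes "A \<in> carrier_mat n m" "B \<in> carrier_mat m n"
  shows "mtr (A * B) = mtr (B * A)"
proof -
  have "mtr (A * B) = (\<Sum>i<n. \<Sum>k<m. A $$ (i, k) * B $$ (k, i))"
    using assms by (simp add: mtr_def mat_sum_simps)
  also have "\<dots> = (\<Sum>k<m. \<Sum>i<n. B $$ (k, i) * A $$ (i, k))"
    by (subst sum.swap) (simp add: mult.commute)
  also have "\<dots> = mtr (B * A)"
    using assms by (simp add: mtr_def mat_sum_simps)
  finally show ?thesis .
qed

lemma mtr_sandwich_cyclic:
  assumes "A \<in> carrier_mat n n" "B \<in> carrier_mat n n" "W \<in> carrier_mat n n"
  shows "mtr (W * A * W * B) = mtr (A * (W * B * W))" "mtr (W * A * W) = mtr (A * (W * W))"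
proof -
  note assoc = assoc_mult_mat[of _ n n _ n _ n]
  have "mtr (W * A * W * B) = mtr (W * (A * W * B))" using assms by (simp add: assoc mult_square_carrier)
  also have "\<dots> = mtr (A * W * B * W)" using assms by (intro mtr_mult_comm[of _ n n]) (auto simp: mult_square_carrier)
  also have "\<dots> = mtr (A * (W * B * W))" using assms by (simp add: assoc mult_square_carrier)
  finally show "mtr (W * A * W * B) = mtr (A * (W * B * W))" .
  have "mtr (W * A * W) = mtr (W * (A * W))" using assms by (simp add: assoc mult_square_carrier)
  also have "\<dots> = mtr (A * W * W)" using assms by (intro mtr_mult_comm[of _ n n]) (auto simp: mult_square_carrier)
  also have "\<dots> = mtr (A * (W * W))" using assms by (simp add: assoc mult_square_carrier)
  finally show "mtr (W * A * W) = mtr (A * (W * W))" .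
qed

lemma mtr_diff: "A \<in> carrier_mat n n \<Longrightarrow> B \<in> carrier_mat n n \<Longrightarrow> mtr (A - B) = mtr A - mtr B"
  by (simp add: mtr_def sum_subtractf)

lemma cinner_adj:
  assumes "A \<in> carrier_mat n m" "u \<in> carrier_vec n" "w \<in> carrier_vec m"
  shows "cinner u (A *\<^sub>v w) = cinner (adj A *\<^sub>v u) w"
proof -
  have "cinner u (A *\<^sub>v w) = (\<Sum>i<n. \<Sum>k<m. cnj (u $ i) * (A $$ (i, k) * w $ k))"
    using assms by (simp add: cinner_def mat_sum_simps sum_distrib_left)
  also have "\<dots> = (\<Sum>k<m. \<Sum>i<n. cnj (cnj (A $$ (i, k)) * u $ i) * w $ k)"
    by (subst sum.swap) (simp add: mult.commute mult.left_commute)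
  also have "\<dots> = cinner (adj A *\<^sub>v u) w"
    using assms by (simp add: cinner_def mat_sum_simps sum_distrib_right)
  finally show ?thesis .
qed

lemma cinner_cnj: "dim_vec u = dim_vec w \<Longrightarrow> cnj (cinner u w) = cinner w u"
  by (simp add: cinner_def mult.commute)

lemma cinner_cscalar_prod: "v \<in> carrier_vec n \<Longrightarrow> w \<in> carrier_vec n \<Longrightarrow> cinner v w = w \<bullet>c v"
  by (simp add: cinner_def scalar_prod_def atLeast0LessThan mult.commute)

lemma cinner_smult: "v \<in> carrier_vec n \<Longrightarrow> w \<in> carrier_vec n \<Longrightarrow>
    cinner (a \<cdot>\<^sub>v v) (b \<cdot>\<^sub>v w) = cnj a * b * cinner v w"
  by (simp add: cinner_def sum_distrib_left mult_ac)

lemma cinner_smult_right: "dim_vec v = dim_vec w \<Longrightarrow> cinner w (c \<cdot>\<^sub>v v) = c * cinner w v"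
  by (simp add: cinner_def sum_distrib_left mult_ac)

lemma cinner_add_mat: "A \<in> carrier_mat n n \<Longrightarrow> B \<in> carrier_mat n n \<Longrightarrow> u \<in> carrier_vec n \<Longrightarrow>
    cinner u ((A + B) *\<^sub>v u) = cinner u (A *\<^sub>v u) + cinner u (B *\<^sub>v u)"
  by (simp add: cinner_def mat_sum_simps distrib_left distrib_right sum.distrib)

lemma cinner_smult_mat: "A \<in> carrier_mat n n \<Longrightarrow> u \<in> carrier_vec n \<Longrightarrow>
    cinner u ((k \<cdot>\<^sub>m A) *\<^sub>v u) = k * cinner u (A *\<^sub>v u)"
  by (simp add: cinner_def mat_sum_simps sum_distrib_left mult_ac)

lemma hermitian_cinner_real:
  assumes A: "hermitian n A" and v: "v \<in> carrier_vec n"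
  shows "cnj (cinner v (A *\<^sub>v v)) = cinner v (A *\<^sub>v v)"
proof -
  have Ac: "A \<in> carrier_mat n n" and hA: "adj A = A"
    using A by (auto simp: hermitian_def)
  have "cnj (cinner v (A *\<^sub>v v)) = cinner (A *\<^sub>v v) v"
    using Ac v by (subst cinner_cnj) auto
  also have "\<dots> = cinner (adj (adj A) *\<^sub>v v) v" by simp
  also have "\<dots> = cinner v (adj A *\<^sub>v v)"
    using Ac v by (subst cinner_adj[of _ n n]) auto
  finally show ?thesis using hA by simp
qed

lemma hermitian_cinner_of_real:
  assumes "hermitian n A" "v \<in> carrier_vec n"
  shows "cinner v (A *\<^sub>v v) = of_real (Re (cinner v (A *\<^sub>v v)))"
  using hermitian_cinner_real[OF assms] by (simp add: complex_eq_iff)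

lemma sum_rotate3: "(\<Sum>i\<in>A. \<Sum>j\<in>B. \<Sum>a\<in>C. f i j a) = (\<Sum>a\<in>C. \<Sum>i\<in>A. \<Sum>j\<in>B. f i j a)"
proof -
  have "(\<Sum>i\<in>A. \<Sum>j\<in>B. \<Sum>a\<in>C. f i j a) = (\<Sum>i\<in>A. \<Sum>a\<in>C. \<Sum>j\<in>B. f i j a)"
    by (intro sum.cong refl) (rule sum.swap)
  also have "\<dots> = (\<Sum>a\<in>C. \<Sum>i\<in>A. \<Sum>j\<in>B. f i j a)" by (rule sum.swap)
  finally show ?thesis .
qed

lemma unitaryD:
  assumes "unitary n U"
  shows "U \<in> carrier_mat n n" "U * adj U = 1\<^sub>m n" "adj U * U = 1\<^sub>m n"
  using assms by (auto simp: unitary_def)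

lemma unitary_cinner_col:
  assumes "unitary n U" "a < n" "b < n"
  shows "cinner (col U a) (col U b) = (if a = b then 1 else 0)"
proof -
  have U: "U \<in> carrier_mat n n" using unitaryD[OF assms(1)] by auto
  have "(adj U * U) $$ (a, b) = (if a = b then 1 else 0)"
    using unitaryD(3)[OF assms(1)] assms by simp
  moreover have "(adj U * U) $$ (a, b) = cinner (col U a) (col U b)"
    using U assms by (simp add: mat_sum_simps cinner_def)
  ultimately show ?thesis by simp
qed

lemma unitary_mult:
  assumes "unitary n U" "unitary n V"
  shows "unitary n (U * V)"
proof -
  note u = unitaryD[OF assms(1)] and v = unitaryD[OF assms(2)]
  note assoc = assoc_mult_mat[of _ n n _ n _ n]
  have a: "adj (U * V) = adj V * adj U" using u v by (simp add: adj_mult)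
  have "U * V * adj (U * V) = U * (V * adj V) * adj U"
    unfolding a using u(1) v(1) by (simp add: assoc mult_square_carrier)
  also have "\<dots> = 1\<^sub>m n" using u v by simp
  finally have 1: "U * V * adj (U * V) = 1\<^sub>m n" .
  have "adj (U * V) * (U * V) = adj V * (adj U * U) * V"
    unfolding a using u(1) v(1) by (simp add: assoc mult_square_carrier)
  also have "\<dots> = 1\<^sub>m n" using u v by simp
  finally show ?thesis unfolding unitary_def using u v 1 by simp
qed

lemma unitary_of_orthonormal_cols:
  assumes W: "W \<in> carrier_mat n n"
    and orth: "\<And>a b. a < n \<Longrightarrow> b < n \<Longrightarrow> cinner (col W a) (col W b) = (if a = b then 1 else 0)"
  shows "unitary n W"
proof -
  have WW: "adj W * W = 1\<^sub>m n"
  proof (rule eq_matI)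
    fix i j assume "i < dim_row (1\<^sub>m n)" "j < dim_col (1\<^sub>m n)"
    hence ij: "i < n" "j < n" by auto
    have "(adj W * W) $$ (i, j) = cinner (col W i) (col W j)"
      using W ij by (simp add: mat_sum_simps cinner_def)
    thus "(adj W * W) $$ (i, j) = 1\<^sub>m n $$ (i, j)" using ij orth by simp
  qed (use W in auto)
  have "W * adj W = 1\<^sub>m n" using mat_mult_left_right_inverse[OF _ W WW] W by simp
  thus ?thesis unfolding unitary_def using W WW by simp
qed

section \<open>Unitarily diagonalised matrices and the functional calculus\<close>

lemma rdiag_carrier [simp]: "rdiag ls \<in> carrier_mat (length ls) (length ls)"
  by (simp add: rdiag_def)

lemma rdiag_dims [simp]: "dim_row (rdiag ls) = length ls" "dim_col (rdiag ls) = length ls"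
  by (simp_all add: rdiag_def)

lemma rdiag_entry [simp]: "i < length ls \<Longrightarrow> j < length ls \<Longrightarrow>
    rdiag ls $$ (i, j) = (if i = j then complex_of_real (ls ! i) else 0)"
  by (simp add: rdiag_def)

lemma adj_rdiag [simp]: "adj (rdiag ls) = rdiag ls"
  by (rule eq_matI) (auto simp: rdiag_def)

lemma rdiag_mult:
  assumes "length a = length b"
  shows "rdiag a * rdiag b = rdiag (map2 (*) a b)"
proof (rule eq_matI)
  fix i j assume ij: "i < dim_row (rdiag (map2 (*) a b))" "j < dim_col (rdiag (map2 (*) a b))"
  have "(rdiag a * rdiag b) $$ (i, j) = (\<Sum>k<length a. rdiag a $$ (i, k) * rdiag b $$ (k, j))"
    using ij assms by (simp add: mat_sum_simps)
  also have "\<dots> = (\<Sum>k<length a. if k = i then (if i = j then complex_of_real (a ! i * b ! i) else 0) else 0)"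
    using ij assms by (intro sum.cong refl) auto
  also have "\<dots> = rdiag (map2 (*) a b) $$ (i, j)" using ij assms by (simp add: sum.delta)
  finally show "(rdiag a * rdiag b) $$ (i, j) = rdiag (map2 (*) a b) $$ (i, j)" .
qed (use assms in auto)

lemma rdiag_smult: "complex_of_real c \<cdot>\<^sub>m rdiag ls = rdiag (map (\<lambda>x. c * x) ls)"
  by (rule eq_matI) (auto simp: rdiag_def)

lemma rdiag_replicate_one: "rdiag (replicate n 1) = 1\<^sub>m n"
  by (rule eq_matI) (auto simp: rdiag_def)

lemma rdiag_intertwine_map:
  assumes W: "W \<in> carrier_mat n n" and l: "length l = n" and m: "length m = n"
    and comm: "W * rdiag l = rdiag m * W"
  shows "W * rdiag (map f l) = rdiag (map f m) * W"
proof -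
  have right: "(W * rdiag ls) $$ (i, j) = W $$ (i, j) * complex_of_real (ls ! j)"
    if "length ls = n" "i < n" "j < n" for ls i j
  proof -
    have "(W * rdiag ls) $$ (i, j) = (\<Sum>k<n. W $$ (i, k) * rdiag ls $$ (k, j))"
      using W that by (simp add: mat_sum_simps)
    also have "\<dots> = (\<Sum>k<n. if k = j then W $$ (i, j) * complex_of_real (ls ! j) else 0)"
      using that by (intro sum.cong refl) auto
    also have "\<dots> = W $$ (i, j) * complex_of_real (ls ! j)" using that by (simp add: sum.delta)
    finally show ?thesis .
  qed
  have left: "(rdiag ls * W) $$ (i, j) = complex_of_real (ls ! i) * W $$ (i, j)"
    if "length ls = n" "i < n" "j < n" for ls i j
  proof -
    have "(rdiag ls * W) $$ (i, j) = (\<Sum>k<n. rdiag ls $$ (i, k) * W $$ (k, j))"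
      using W that by (simp add: mat_sum_simps)
    also have "\<dots> = (\<Sum>k<n. if k = i then complex_of_real (ls ! i) * W $$ (i, j) else 0)"
      using that by (intro sum.cong refl) auto
    also have "\<dots> = complex_of_real (ls ! i) * W $$ (i, j)" using that by (simp add: sum.delta)
    finally show ?thesis .
  qed
  show ?thesis
  proof (rule eq_matI)
    fix i j assume "i < dim_row (rdiag (map f m) * W)" "j < dim_col (rdiag (map f m) * W)"
    hence ij: "i < n" "j < n" using W m by auto
    have "W $$ (i, j) * complex_of_real (l ! j) = complex_of_real (m ! i) * W $$ (i, j)"
      using arg_cong[OF comm, of "\<lambda>M. M $$ (i, j)"] right[OF l ij] left[OF m ij] by simp
    hence "W $$ (i, j) = 0 \<or> l ! j = m ! i" by auto
    hence "W $$ (i, j) * complex_of_real (map f l ! j) = complex_of_real (map f m ! i) * W $$ (i, j)"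
      using ij l m by auto
    thus "(W * rdiag (map f l)) $$ (i, j) = (rdiag (map f m) * W) $$ (i, j)"
      using right[of "map f l"] left[of "map f m"] l m ij by simp
  qed (use W l m in auto)
qed

definition udiag :: "complex mat \<Rightarrow> real list \<Rightarrow> complex mat" where
  "udiag U ls = U * rdiag ls * adj U"

lemma udiag_carrier [simp]: "U \<in> carrier_mat n n \<Longrightarrow> length ls = n \<Longrightarrow> udiag U ls \<in> carrier_mat n n"
  unfolding udiag_def by (metis adj_carrier mult_carrier_mat rdiag_carrier)

lemma udiag_dims [simp]: "dim_row (udiag U ls) = dim_row U" "dim_col (udiag U ls) = dim_row U"
  unfolding udiag_def by auto

lemma udiag_entry:
  assumes U: "U \<in> carrier_mat n n" and l: "length ls = n" and ij: "i < n" "j < n"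
  shows "udiag U ls $$ (i, j) = (\<Sum>a<n. U $$ (i, a) * complex_of_real (ls ! a) * cnj (U $$ (j, a)))"
proof -
  have "udiag U ls $$ (i, j) = (\<Sum>k<n. (U * rdiag ls) $$ (i, k) * cnj (U $$ (j, k)))"
    unfolding udiag_def using U l ij by (subst index_mult_mat_sum) auto
  also have "\<dots> = (\<Sum>k<n. (\<Sum>a<n. U $$ (i, a) * rdiag ls $$ (a, k)) * cnj (U $$ (j, k)))"
    using U l ij by (intro sum.cong refl, subst index_mult_mat_sum) auto
  also have "\<dots> = (\<Sum>k<n. U $$ (i, k) * complex_of_real (ls ! k) * cnj (U $$ (j, k)))"
  proof (intro sum.cong refl)
    fix k assume k: "k \<in> {..<n}"
    have "(\<Sum>a<n. U $$ (i, a) * rdiag ls $$ (a, k)) =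
        (\<Sum>a<n. if a = k then U $$ (i, k) * complex_of_real (ls ! k) else 0)"
      using k l by (intro sum.cong refl) auto
    also have "\<dots> = U $$ (i, k) * complex_of_real (ls ! k)" using k by (simp add: sum.delta)
    finally show "(\<Sum>a<n. U $$ (i, a) * rdiag ls $$ (a, k)) * cnj (U $$ (j, k)) =
        U $$ (i, k) * complex_of_real (ls ! k) * cnj (U $$ (j, k))"
      by simp
  qed
  finally show ?thesis .
qed

lemma mtr_mult_udiag:
  assumes U: "U \<in> carrier_mat n n" and l: "length ls = n" and M: "M \<in> carrier_mat n n"
  shows "mtr (M * udiag U ls) = (\<Sum>a<n. complex_of_real (ls ! a) * cinner (col U a) (M *\<^sub>v col U a))"
proof -
  have "mtr (M * udiag U ls) = (\<Sum>i<n. \<Sum>j<n. M $$ (i, j) * udiag U ls $$ (j, i))"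
    using U l M by (simp add: mtr_def mat_sum_simps)
  also have "\<dots> = (\<Sum>i<n. \<Sum>j<n. \<Sum>a<n. M $$ (i, j) * (U $$ (j, a) * complex_of_real (ls ! a) * cnj (U $$ (i, a))))"
    using U l by (simp add: udiag_entry sum_distrib_left)
  also have "\<dots> = (\<Sum>a<n. \<Sum>i<n. \<Sum>j<n. M $$ (i, j) * (U $$ (j, a) * complex_of_real (ls ! a) * cnj (U $$ (i, a))))"
    by (rule sum_rotate3)
  also have "\<dots> = (\<Sum>a<n. complex_of_real (ls ! a) * (\<Sum>i<n. cnj (U $$ (i, a)) * (\<Sum>j<n. M $$ (i, j) * U $$ (j, a))))"
    by (simp add: sum_distrib_left mult_ac)
  also have "\<dots> = (\<Sum>a<n. complex_of_real (ls ! a) * cinner (col U a) (M *\<^sub>v col U a))"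
    using U M by (intro sum.cong refl) (simp add: cinner_def mat_sum_simps)
  finally show ?thesis .
qed

lemma cinner_udiag:
  assumes U: "U \<in> carrier_mat n n" and l: "length ls = n" and v: "v \<in> carrier_vec n"
  shows "cinner v (udiag U ls *\<^sub>v v) =
    (\<Sum>a<n. complex_of_real (ls ! a) * (cnj (cinner (col U a) v) * cinner (col U a) v))"
proof -
  have "cinner v (udiag U ls *\<^sub>v v) = (\<Sum>i<n. \<Sum>j<n. cnj (v $ i) * (udiag U ls $$ (i, j) * v $ j))"
    using U l v by (simp add: cinner_def mat_sum_simps sum_distrib_left)
  also have "\<dots> = (\<Sum>i<n. \<Sum>j<n. \<Sum>a<n. cnj (v $ i) * (U $$ (i, a) * complex_of_real (ls ! a) * cnj (U $$ (j, a)) * v $ j))"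
    using U l by (simp add: udiag_entry sum_distrib_left sum_distrib_right)
  also have "\<dots> = (\<Sum>a<n. \<Sum>i<n. \<Sum>j<n. cnj (v $ i) * (U $$ (i, a) * complex_of_real (ls ! a) * cnj (U $$ (j, a)) * v $ j))"
    by (rule sum_rotate3)
  also have "\<dots> = (\<Sum>a<n. complex_of_real (ls ! a) * ((\<Sum>i<n. U $$ (i, a) * cnj (v $ i)) * (\<Sum>j<n. cnj (U $$ (j, a)) * v $ j)))"
    by (simp add: sum_distrib_left sum_distrib_right mult_ac)
  also have "\<dots> = (\<Sum>a<n. complex_of_real (ls ! a) * (cnj (cinner (col U a) v) * cinner (col U a) v))"
    using U v by (simp add: cinner_def)
  finally show ?thesis .
qed

lemma udiag_mult:
  assumes U: "unitary n U" and l: "length a = n" "length b = n"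
  shows "udiag U a * udiag U b = udiag U (map2 (*) a b)"
proof -
  have Uc: "U \<in> carrier_mat n n" and UU: "adj U * U = 1\<^sub>m n" using unitaryD[OF U] by auto
  have d: "rdiag a \<in> carrier_mat n n" "rdiag b \<in> carrier_mat n n" using l by (metis rdiag_carrier)+
  note assoc = assoc_mult_mat[of _ n n _ n _ n]
  have "udiag U a * udiag U b = U * rdiag a * (adj U * U) * rdiag b * adj U"
    unfolding udiag_def using Uc d by (simp add: assoc mult_square_carrier left_mult_one_mat right_mult_one_mat)
  also have "\<dots> = U * (rdiag a * rdiag b) * adj U"
    unfolding UU using Uc d by (simp add: assoc mult_square_carrier left_mult_one_mat right_mult_one_mat)
  finally show ?thesis unfolding udiag_def rdiag_mult[OF l(1)[folded l(2)]] .
qed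

lemma udiag_mult_map:
  assumes "unitary n U" "length ls = n"
  shows "udiag U (map f ls) * udiag U (map g ls) = udiag U (map (\<lambda>x. f x * g x) ls)"
proof -
  have "map2 (*) (map f ls) (map g ls) = map (\<lambda>x. f x * g x) ls"
    by (induct ls) auto
  thus ?thesis using udiag_mult[OF assms(1)] assms(2) by auto
qed

lemma adj_udiag:
  assumes U: "U \<in> carrier_mat n n" and l: "length ls = n"
  shows "adj (udiag U ls) = udiag U ls"
proof -
  have d: "rdiag ls \<in> carrier_mat n n" using l by (metis rdiag_carrier)
  have "adj (udiag U ls) = adj (adj U) * adj (U * rdiag ls)"
    unfolding udiag_def using U d by (subst adj_mult[of _ n n]) auto
  also have "\<dots> = U * (rdiag ls * adj U)"
    using U d by (subst adj_mult[of _ n n]) auto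
  finally show ?thesis unfolding udiag_def using U d by (simp add: assoc_mult_mat[of _ n n _ n _ n])
qed

lemma hermitian_udiag: "U \<in> carrier_mat n n \<Longrightarrow> length ls = n \<Longrightarrow> hermitian n (udiag U ls)"
  unfolding hermitian_def using adj_udiag udiag_carrier by blast

lemma udiag_smult:
  assumes U: "U \<in> carrier_mat n n" and l: "length ls = n"
  shows "complex_of_real c \<cdot>\<^sub>m udiag U ls = udiag U (map (\<lambda>x. c * x) ls)"
proof -
  have d: "rdiag ls \<in> carrier_mat n n" using l by (metis rdiag_carrier)
  show ?thesis unfolding udiag_def rdiag_smult[symmetric]
    using U d by (simp add: mult_smult_distrib mult_smult_assoc_mat[of _ n n _ n])
qed

lemma udiag_replicate_one:
  assumes "unitary n U"
  shows "udiag U (replicate n 1) = 1\<^sub>m n"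
  using unitaryD[OF assms] unfolding udiag_def rdiag_replicate_one by simp

lemma cinner_udiag_col:
  assumes U: "unitary n U" and l: "length ls = n" and b: "b < n"
  shows "cinner (col U b) (udiag U ls *\<^sub>v col U b) = complex_of_real (ls ! b)"
proof -
  have Uc: "U \<in> carrier_mat n n" using unitaryD[OF U] by auto
  have "cinner (col U b) (udiag U ls *\<^sub>v col U b) =
      (\<Sum>a<n. complex_of_real (ls ! a) * (cnj (cinner (col U a) (col U b)) * cinner (col U a) (col U b)))"
    using Uc l b by (intro cinner_udiag) auto
  also have "\<dots> = (\<Sum>a<n. if a = b then complex_of_real (ls ! b) else 0)"
    using U b by (intro sum.cong refl) (auto simp: unitary_cinner_col)
  finally show ?thesis using b by (simp add: sum.delta)
qed

lemma mtr_unitary_basis: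
  assumes U: "unitary n U" and M: "M \<in> carrier_mat n n"
  shows "mtr M = (\<Sum>a<n. cinner (col U a) (M *\<^sub>v col U a))"
proof -
  have "mtr M = mtr (M * udiag U (replicate n 1))" using udiag_replicate_one[OF U] M by simp
  also have "\<dots> = (\<Sum>a<n. cinner (col U a) (M *\<^sub>v col U a))"
    using mtr_mult_udiag[OF unitaryD(1)[OF U] _ M, of "replicate n 1"] by simp
  finally show ?thesis .
qed

lemma mtr_udiag:
  assumes U: "unitary n U" and l: "length ls = n"
  shows "mtr (udiag U ls) = complex_of_real (sum_list ls)"
proof -
  have Uc: "U \<in> carrier_mat n n" using unitaryD[OF U] by auto
  have "mtr (udiag U ls) = (\<Sum>a<n. complex_of_real (ls ! a))"
    unfolding mtr_unitary_basis[OF U udiag_carrier[OF Uc l]] using U l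
    by (intro sum.cong refl) (simp add: cinner_udiag_col)
  also have "\<dots> = complex_of_real (sum_list ls)"
    using l by (simp add: sum_list_sum_nth atLeast0LessThan)
  finally show ?thesis .
qed

lemma normalize_udiag:
  assumes U: "unitary n U" and l: "length ls = n"
  shows "(1 / mtr (udiag U ls)) \<cdot>\<^sub>m udiag U ls = udiag U (map (\<lambda>x. x / sum_list ls) ls)"
proof -
  have "udiag U (map (\<lambda>x. x / sum_list ls) ls) = complex_of_real (1 / sum_list ls) \<cdot>\<^sub>m udiag U ls"
    using udiag_smult[OF unitaryD(1)[OF U] l, of "1 / sum_list ls"] by simp
  thus ?thesis unfolding mtr_udiag[OF U l] by simp
qed

lemma parseval:
  assumes V: "unitary n V" and w: "w \<in> carrier_vec n"
  shows "(\<Sum>b<n. cnj (cinner (col V b) w) * cinner (col V b) w) = cinner w w"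
proof -
  have "cinner w (udiag V (replicate n 1) *\<^sub>v w) =
      (\<Sum>b<n. complex_of_real (replicate n 1 ! b) * (cnj (cinner (col V b) w) * cinner (col V b) w))"
    by (rule cinner_udiag[OF unitaryD(1)[OF V] _ w]) simp
  thus ?thesis using udiag_replicate_one[OF V] w by simp
qed

lemma psd_udiag:
  assumes U: "unitary n U" and l: "length ls = n" and nonneg: "\<forall>a<n. ls ! a \<ge> 0"
  shows "psd n (udiag U ls)"
proof -
  have Uc: "U \<in> carrier_mat n n" using unitaryD[OF U] by auto
  have "0 \<le> Re (cinner v (udiag U ls *\<^sub>v v))" if v: "v \<in> carrier_vec n" for v
  proof -
    have "Re (cinner v (udiag U ls *\<^sub>v v)) =
        (\<Sum>a<n. ls ! a * ((Re (cinner (col U a) v))\<^sup>2 + (Im (cinner (col U a) v))\<^sup>2))"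
      unfolding cinner_udiag[OF Uc l v] Re_sum
      by (intro sum.cong refl) (simp add: power2_eq_square algebra_simps)
    also have "\<dots> \<ge> 0" using nonneg by (intro sum_nonneg) auto
    finally show ?thesis .
  qed
  thus ?thesis unfolding psd_def using hermitian_udiag[OF Uc l] by simp
qed

lemma supp_subset_carrier:
  assumes "A \<in> carrier_mat n m"
  shows "supp A \<subseteq> carrier_vec n"
proof
  fix y assume "y \<in> supp A"
  then obtain v where y: "y = A *\<^sub>v v" unfolding supp_def by blast
  have "dim_row A = n" using assms by blast
  thus "y \<in> carrier_vec n" unfolding y carrier_vec_def by simp
qed

lemma supp_udiag_pos:
  assumes V: "unitary n V" and l: "length d = n" and pos: "\<forall>b<n. d ! b > 0"
  shows "supp (udiag V d) = carrier_vec n"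
proof
  have Vc: "V \<in> carrier_mat n n" using unitaryD[OF V] by auto
  show "supp (udiag V d) \<subseteq> carrier_vec n"
    using supp_subset_carrier[OF udiag_carrier[OF Vc l]] .
  show "carrier_vec n \<subseteq> supp (udiag V d)"
  proof
    fix w :: "complex vec" assume w: "w \<in> carrier_vec n"
    have "udiag V d * udiag V (map inverse d) = udiag V (map2 (*) d (map inverse d))"
      using udiag_mult[OF V l] l by simp
    also have "map2 (*) d (map inverse d) = replicate n 1"
      using l pos by (intro nth_equalityI) auto
    finally have inv: "udiag V d * udiag V (map inverse d) = 1\<^sub>m n"
      using udiag_replicate_one[OF V] by simp
    have "w = udiag V d *\<^sub>v (udiag V (map inverse d) *\<^sub>v w)"
      using inv w Vc l by (simp add: assoc_mult_mat_vec[of _ n n _ n, symmetric])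
    moreover have "udiag V (map inverse d) *\<^sub>v w \<in> carrier_vec (dim_col (udiag V d))"
    proof -
      have "udiag V (map inverse d) \<in> carrier_mat n n" using Vc l by simp
      from mult_mat_vec_carrier[OF this w] show ?thesis using Vc by simp
    qed
    ultimately show "w \<in> supp (udiag V d)" unfolding supp_def by blast
  qed
qed

text \<open>The functional calculus is well defined: two spectral decompositions of the same matrix
  give the same f(A), because the unitary intertwining the two diagonal forms commutes with
  every function of the eigenvalues.\<close>

lemma udiag_map_eq:
  assumes U: "unitary n U" and V: "unitary n V" and l: "length l = n" and m: "length m = n"
    and eq: "udiag U l = udiag V m"
  shows "udiag U (map f l) = udiag V (map f m)"
proof -
  note u = unitaryD[OF U] and v = unitaryD[OF V]
  have dl: "rdiag l \<in> carrier_mat n n" "rdiag (map f l) \<in> carrier_mat n n"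
    using l by (metis rdiag_carrier length_map)+
  have dm: "rdiag m \<in> carrier_mat n n" "rdiag (map f m) \<in> carrier_mat n n"
    using m by (metis rdiag_carrier length_map)+
  note assoc = assoc_mult_mat[of _ n n _ n _ n]
  define W where "W = adj V * U"
  have W: "W \<in> carrier_mat n n" unfolding W_def using u v by (simp add: mult_square_carrier)
  have "adj V * udiag U l * U = W * rdiag l"
  proof -
    have "adj V * udiag U l * U = adj V * U * rdiag l * (adj U * U)"
      unfolding udiag_def using u(1) v(1) dl by (simp add: assoc mult_square_carrier)
    thus ?thesis unfolding u(3) W_def using u(1) v(1) dl by (simp add: assoc mult_square_carrier right_mult_one_mat)
  qed
  moreover have "adj V * udiag V m * U = rdiag m * W"
  proof -
    have "adj V * udiag V m * U = (adj V * V) * rdiag m * (adj V * U)"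
      unfolding udiag_def using u(1) v(1) dm by (simp add: assoc mult_square_carrier)
    thus ?thesis unfolding v(3) W_def using dm by (simp add: left_mult_one_mat)
  qed
  ultimately have "W * rdiag l = rdiag m * W" using eq by simp
  from rdiag_intertwine_map[OF W l m this]
  have commf: "W * rdiag (map f l) = rdiag (map f m) * W" .
  have WU: "W * adj U = adj V"
    unfolding W_def using u v by (simp add: assoc mult_square_carrier right_mult_one_mat)
  have "udiag V (map f m) = V * rdiag (map f m) * (W * adj U)"
    unfolding udiag_def WU ..
  also have "\<dots> = V * (rdiag (map f m) * W) * adj U"
    using u(1) v(1) dm W by (simp add: assoc mult_square_carrier)
  also have "\<dots> = (V * adj V) * U * rdiag (map f l) * adj U"
    unfolding commf[symmetric] unfolding W_def using u(1) v(1) dl by (simp add: assoc mult_square_carrier right_mult_one_mat)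
  also have "\<dots> = udiag U (map f l)" unfolding v(2) udiag_def using u(1) by simp
  finally show ?thesis by simp
qed

lemma mat_fun_udiag:
  assumes U: "unitary n U" and l: "length ls = n"
  shows "mat_fun f (udiag U ls) = udiag U (map f ls)"
proof -
  have dr: "dim_row (udiag U ls) = n" using unitaryD(1)[OF U] by simp
  let ?P = "\<lambda>B. \<exists>U' ls'. unitary n U' \<and> length ls' = n \<and> udiag U ls = U' * rdiag ls' * adj U' \<and>
    B = U' * rdiag (map f ls') * adj U'"
  have "\<exists>B. ?P B" using U l unfolding udiag_def by blast
  hence "?P (SOME B. ?P B)" by (rule someI_ex)
  then obtain U' ls' where U': "unitary n U'" and l': "length ls' = n"
    and eq: "udiag U ls = udiag U' ls'" and B: "(SOME B. ?P B) = udiag U' (map f ls')"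
    unfolding udiag_def by blast
  have "mat_fun f (udiag U ls) = (SOME B. ?P B)" unfolding mat_fun_def dr by simp
  also have "\<dots> = udiag U (map f ls)" unfolding B using udiag_map_eq[OF U' U l' l eq[symmetric]] .
  finally show ?thesis .
qed

section \<open>The spectral theorem for Hermitian matrices\<close>

lemma unitary_normalized_corthogonal:
  assumes ws: "set ws \<subseteq> carrier_vec n" "corthogonal ws" "length ws = n"
  shows "unitary n (mat_of_cols n (map (\<lambda>w. complex_of_real (1 / sqrt (Re (cinner w w))) \<cdot>\<^sub>v w) ws))"
    (is "unitary n ?W")
proof (rule unitary_of_orthonormal_cols)
  have wsc: "ws ! a \<in> carrier_vec n" if "a < n" for a using ws that by auto
  define r where "r a = Re (cinner (ws ! a) (ws ! a))" for a
  have r: "r a > 0 \<and> cinner (ws ! a) (ws ! a) = complex_of_real (r a)" if a: "a < n" for a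
  proof -
    have ge: "ws ! a \<bullet>c ws ! a \<ge> 0" by auto
    have ne: "ws ! a \<bullet>c ws ! a \<noteq> 0" using corthogonalD[OF ws(2), of a a] a ws(3) by auto
    show ?thesis using ge ne unfolding r_def cinner_cscalar_prod[OF wsc[OF a] wsc[OF a]]
      by (auto simp: less_eq_complex_def complex_eq_iff)
  qed
  have col: "col ?W a = complex_of_real (1 / sqrt (r a)) \<cdot>\<^sub>v ws ! a" if "a < n" for a
    using that ws(3) wsc[OF that] by (simp add: r_def)
  show "?W \<in> carrier_mat n n" unfolding carrier_mat_def using ws(3) by simp
  fix a b assume a: "a < n" and b: "b < n"
  have cab: "cinner (col ?W a) (col ?W b) =
      complex_of_real (1 / sqrt (r a)) * complex_of_real (1 / sqrt (r b)) * cinner (ws ! a) (ws ! b)"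
    unfolding col[OF a] col[OF b] using wsc[OF a] wsc[OF b] by (simp add: cinner_smult[of _ n])
  show "cinner (col ?W a) (col ?W b) = (if a = b then 1 else 0)"
  proof (cases "a = b")
    case True
    have "sqrt (r a) * sqrt (r a) = r a" "sqrt (r a) > 0" using r[OF a] by auto
    hence "1 / sqrt (r a) * (1 / sqrt (r a)) * r a = 1" by (simp add: field_simps)
    hence "complex_of_real (1 / sqrt (r a)) * complex_of_real (1 / sqrt (r a)) * complex_of_real (r a) = 1"
      by (simp only: of_real_mult[symmetric] of_real_1)
    thus ?thesis unfolding cab using True r[OF a] by simp
  next
    case False
    have "cinner (ws ! a) (ws ! b) = 0"
      using corthogonalD[OF ws(2), of b a] a b ws(3) False cinner_cscalar_prod[OF wsc[OF a] wsc[OF b]]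
      by simp
    thus ?thesis unfolding cab using False by simp
  qed
qed

lemma unitary_first_col:
  assumes v: "v \<in> carrier_vec n" and v0: "v \<noteq> 0\<^sub>v n" and n: "n > 0"
  obtains W c where "unitary n W" "col W 0 = c \<cdot>\<^sub>v v"
proof -
  interpret cof_vec_space n "TYPE(complex)" .
  define b where "b = basis_completion v"
  define ws where "ws = gram_schmidt n b"
  from basis_completion[OF v v0, folded b_def]
  have dist_b: "distinct b" and indep: "\<not> lin_dep (set b)" and bc: "set b \<subseteq> carrier_vec n"
    and hdb: "hd b = v" and len_b: "length b = n" by auto
  from hdb len_b n obtain vs where bv: "b = v # vs" by (cases b) auto
  from gram_schmidt_result[OF bc dist_b indep refl, folded ws_def]
  have ws: "set ws \<subseteq> carrier_vec n" "corthogonal ws" "length ws = n" by (auto simp: len_b)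
  from gram_schmidt_hd[OF v, of vs, folded bv] have "hd ws = v" unfolding ws_def .
  hence ws0: "ws ! 0 = v" using ws(3) n by (cases ws) auto
  let ?W = "mat_of_cols n (map (\<lambda>w. complex_of_real (1 / sqrt (Re (cinner w w))) \<cdot>\<^sub>v w) ws)"
  have "col ?W 0 = complex_of_real (1 / sqrt (Re (cinner v v))) \<cdot>\<^sub>v v"
    using ws(3) ws0 n v by simp
  with unitary_normalized_corthogonal[OF ws] show ?thesis by (rule that)
qed

lemma adj_mult_mult_entry:
  assumes U: "U \<in> carrier_mat n n" and M: "M \<in> carrier_mat n n" and ab: "a < n" "b < n"
  shows "(adj U * M * U) $$ (a, b) = cinner (col U a) (M *\<^sub>v col U b)"
proof -
  have "(adj U * M * U) $$ (a, b) = (\<Sum>k<n. (\<Sum>j<n. cnj (U $$ (j, a)) * M $$ (j, k)) * U $$ (k, b))"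
    using U M ab by (simp add: mat_sum_simps)
  also have "\<dots> = (\<Sum>j<n. \<Sum>k<n. cnj (U $$ (j, a)) * (M $$ (j, k) * U $$ (k, b)))"
    by (subst sum.swap) (simp add: sum_distrib_right sum_distrib_left mult_ac)
  also have "\<dots> = cinner (col U a) (M *\<^sub>v col U b)"
    using U M ab by (simp add: cinner_def mat_sum_simps sum_distrib_left)
  finally show ?thesis .
qed

lemma hermitian_unitary_conj:
  assumes A: "hermitian n A" and W: "unitary n W"
  shows "hermitian n (adj W * A * W)"
proof -
  have Ac: "A \<in> carrier_mat n n" and hA: "adj A = A" using A by (auto simp: hermitian_def)
  note w = unitaryD[OF W]
  have "adj (adj W * A * W) = adj W * A * W"
    using w Ac hA by (simp add: adj_mult[of _ n n _ n] assoc_mult_mat[of _ n n _ n _ n] mult_square_carrier)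
  thus ?thesis unfolding hermitian_def using w Ac by (simp add: mult_square_carrier)
qed

lemma hermitian_eigvec_deflation:
  assumes A: "hermitian (Suc m) A"
  obtains W d where "unitary (Suc m) W"
    "\<And>i. i < Suc m \<Longrightarrow> (adj W * A * W) $$ (i, 0) = (if i = 0 then complex_of_real d else 0)"
proof -
  have Ac: "A \<in> carrier_mat (Suc m) (Suc m)" using A by (simp add: hermitian_def)
  from spectrum_non_empty[OF Ac] obtain e where "eigenvalue A e" unfolding spectrum_def by auto
  from find_eigenvector[OF Ac this] obtain v where "eigenvector A v e" by blast
  hence v: "v \<in> carrier_vec (Suc m)" and v0: "v \<noteq> 0\<^sub>v (Suc m)" and Av: "A *\<^sub>v v = e \<cdot>\<^sub>v v"
    using Ac unfolding eigenvector_def by auto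
  obtain W c where W: "unitary (Suc m) W" and cW: "col W 0 = c \<cdot>\<^sub>v v"
    using unitary_first_col[OF v v0] by blast
  note w = unitaryD[OF W]
  let ?A' = "adj W * A * W"
  have AW0: "A *\<^sub>v col W 0 = e \<cdot>\<^sub>v col W 0"
    unfolding cW using Ac v Av by (simp add: mult_mat_vec smult_smult_assoc mult.commute)
  have col0: "?A' $$ (i, 0) = (if i = 0 then e else 0)" if i: "i < Suc m" for i
  proof -
    have "?A' $$ (i, 0) = cinner (col W i) (A *\<^sub>v col W 0)"
      using adj_mult_mult_entry[OF w(1) Ac i] by simp
    also have "\<dots> = e * cinner (col W i) (col W 0)"
      unfolding AW0 by (simp add: cinner_def sum_distrib_left mult_ac)
    finally show ?thesis using unitary_cinner_col[OF W i] by simp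
  qed
  have hA': "adj ?A' = ?A'" and cA': "?A' \<in> carrier_mat (Suc m) (Suc m)"
    using hermitian_unitary_conj[OF A W] by (auto simp: hermitian_def)
  have "cnj e = e"
  proof -
    have "?A' $$ (0, 0) = adj ?A' $$ (0, 0)" using hA' by simp
    also have "\<dots> = cnj (?A' $$ (0, 0))" using carrier_matD[OF cA'] by simp
    finally show ?thesis using col0[of 0] by simp
  qed
  hence "e \<in> \<real>" using Reals_cnj_iff by blast
  then obtain d where "e = complex_of_real d" by (auto elim: Reals_cases)
  with W col0 show ?thesis by (intro that[of W d]) auto
qed

lemma hermitian_lower_block:
  assumes "hermitian (Suc m) A"
  shows "hermitian m (mat m m (\<lambda>(i, j). A $$ (Suc i, Suc j)))"
proof -
  have A: "A \<in> carrier_mat (Suc m) (Suc m)" and hA: "adj A = A"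
    using assms by (auto simp: hermitian_def)
  let ?B = "mat m m (\<lambda>(i, j). A $$ (Suc i, Suc j))"
  have "adj ?B = ?B"
  proof (rule eq_matI)
    fix i j assume "i < dim_row ?B" "j < dim_col ?B"
    hence ij: "i < m" "j < m" by auto
    have "A $$ (Suc i, Suc j) = cnj (A $$ (Suc j, Suc i))"
      using arg_cong[OF hA, of "\<lambda>M. M $$ (Suc i, Suc j)"] A ij by simp
    thus "adj ?B $$ (i, j) = ?B $$ (i, j)" using ij by simp
  qed auto
  thus ?thesis unfolding hermitian_def by simp
qed

definition oplus_one :: "complex mat \<Rightarrow> nat \<Rightarrow> complex mat" where
  "oplus_one U m = mat (Suc m) (Suc m)
     (\<lambda>(i, j). if i = 0 \<and> j = 0 then 1 else if i = 0 \<or> j = 0 then 0 else U $$ (i - 1, j - 1))"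

lemma oplus_one_carrier [simp]: "oplus_one U m \<in> carrier_mat (Suc m) (Suc m)"
  by (simp add: oplus_one_def)

lemma oplus_one_dims [simp]: "dim_row (oplus_one U m) = Suc m" "dim_col (oplus_one U m) = Suc m"
  by (simp_all add: oplus_one_def)

lemma udiag_oplus_one_entry:
  assumes U: "U \<in> carrier_mat m m" and l: "length l = m" and ij: "i < Suc m" "j < Suc m"
  shows "udiag (oplus_one U m) (d # l) $$ (i, j) =
    (if i = 0 \<and> j = 0 then complex_of_real d else if i = 0 \<or> j = 0 then 0
     else udiag U l $$ (i - 1, j - 1))"
proof -
  let ?B = "oplus_one U m"
  have "udiag ?B (d # l) $$ (i, j) =
      (\<Sum>a<Suc m. ?B $$ (i, a) * complex_of_real ((d # l) ! a) * cnj (?B $$ (j, a)))"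
    using l ij by (intro udiag_entry) auto
  also have "\<dots> = ?B $$ (i, 0) * complex_of_real d * cnj (?B $$ (j, 0)) +
      (\<Sum>a<m. ?B $$ (i, Suc a) * complex_of_real (l ! a) * cnj (?B $$ (j, Suc a)))"
    by (subst sum.lessThan_Suc_shift) simp
  also have "\<dots> = (if i = 0 \<and> j = 0 then complex_of_real d else if i = 0 \<or> j = 0 then 0
      else (\<Sum>a<m. U $$ (i - 1, a) * complex_of_real (l ! a) * cnj (U $$ (j - 1, a))))"
    using ij by (auto simp: oplus_one_def)
  finally show ?thesis using udiag_entry[OF U l, of "i - 1" "j - 1"] ij by auto
qed

lemma unitary_oplus_one:
  assumes U: "unitary m U"
  shows "unitary (Suc m) (oplus_one U m)"
proof -
  let ?B = "oplus_one U m"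
  have Uc: "U \<in> carrier_mat m m" using unitaryD[OF U] by simp
  have "?B * adj ?B = udiag ?B (1 # replicate m 1)"
    unfolding udiag_def using rdiag_replicate_one[of "Suc m"] by simp
  also have "\<dots> = 1\<^sub>m (Suc m)"
    using udiag_oplus_one_entry[OF Uc, of "replicate m 1"] udiag_replicate_one[OF U]
    by (intro eq_matI) auto
  finally have BB: "?B * adj ?B = 1\<^sub>m (Suc m)" .
  have "adj ?B * ?B = 1\<^sub>m (Suc m)"
    using mat_mult_left_right_inverse[OF oplus_one_carrier _ BB] by simp
  thus ?thesis unfolding unitary_def using BB by simp
qed

lemma udiag_oplus_one_eq:
  assumes A: "hermitian (Suc m) A"
    and col0: "\<And>i. i < Suc m \<Longrightarrow> A $$ (i, 0) = (if i = 0 then complex_of_real d else 0)"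
    and U: "U \<in> carrier_mat m m" and l: "length l = m"
    and block: "mat m m (\<lambda>(i, j). A $$ (Suc i, Suc j)) = udiag U l"
  shows "A = udiag (oplus_one U m) (d # l)"
proof (rule eq_matI)
  have Ac: "A \<in> carrier_mat (Suc m) (Suc m)" and hA: "adj A = A"
    using A by (auto simp: hermitian_def)
  fix i j assume "i < dim_row (udiag (oplus_one U m) (d # l))" "j < dim_col (udiag (oplus_one U m) (d # l))"
  hence ij: "i < Suc m" "j < Suc m" by auto
  have row0: "A $$ (0, j) = 0" if "j \<noteq> 0"
  proof -
    have "A $$ (0, j) = cnj (A $$ (j, 0))"
      using arg_cong[OF hA, of "\<lambda>M. M $$ (0, j)"] Ac ij by simp
    thus ?thesis using col0[OF ij(2)] that by simp
  qed
  have inner: "A $$ (i, j) = udiag U l $$ (i - 1, j - 1)" if "i \<noteq> 0" "j \<noteq> 0"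
    using arg_cong[OF block, of "\<lambda>M. M $$ (i - 1, j - 1)"] ij that by simp
  show "A $$ (i, j) = udiag (oplus_one U m) (d # l) $$ (i, j)"
    unfolding udiag_oplus_one_entry[OF U l ij] using col0 ij row0 inner by auto
qed (use carrier_matD[OF A[unfolded hermitian_def, THEN conjunct1]] in auto)

theorem hermitian_spectral:
  "hermitian n A \<Longrightarrow> \<exists>U ls. unitary n U \<and> length ls = n \<and> A = udiag U ls"
proof (induction n arbitrary: A)
  case 0
  hence "A \<in> carrier_mat 0 0" by (simp add: hermitian_def)
  hence "A = udiag (1\<^sub>m 0) []" by (intro eq_matI) (auto simp: udiag_def)
  moreover have "unitary 0 (1\<^sub>m 0)" unfolding unitary_def by simp
  ultimately show ?case by force
next
  case (Suc m A)
  obtain W d where W: "unitary (Suc m) W"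
    and col0: "\<And>i. i < Suc m \<Longrightarrow> (adj W * A * W) $$ (i, 0) = (if i = 0 then complex_of_real d else 0)"
    using hermitian_eigvec_deflation[OF Suc.prems] by blast
  note w = unitaryD[OF W]
  have Ac: "A \<in> carrier_mat (Suc m) (Suc m)" using Suc.prems by (simp add: hermitian_def)
  have hA': "hermitian (Suc m) (adj W * A * W)" by (rule hermitian_unitary_conj[OF Suc.prems W])
  obtain U l where U: "unitary m U" and l: "length l = m"
    and block: "mat m m (\<lambda>(i, j). (adj W * A * W) $$ (Suc i, Suc j)) = udiag U l"
    using Suc.IH[OF hermitian_lower_block[OF hA']] by blast
  let ?B = "oplus_one U m"
  have "W * (adj W * A * W) * adj W = (W * adj W) * A * (W * adj W)"
    using w(1) Ac by (simp add: assoc_mult_mat[of _ "Suc m" "Suc m" _ "Suc m" _ "Suc m"] mult_square_carrier)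
  hence "A = W * (adj W * A * W) * adj W"
    using w carrier_matD[OF Ac] by simp
  also have "adj W * A * W = udiag ?B (d # l)"
    by (rule udiag_oplus_one_eq[OF hA' col0 unitaryD(1)[OF U] l block])
  also have "W * udiag ?B (d # l) * adj W = udiag (W * ?B) (d # l)"
  proof -
    have D: "rdiag (d # l) \<in> carrier_mat (Suc m) (Suc m)" using rdiag_carrier[of "d # l"] l by simp
    show ?thesis
      unfolding udiag_def adj_mult[OF w(1) oplus_one_carrier] using w(1) D
      by (simp add: assoc_mult_mat[of _ "Suc m" "Suc m" _ "Suc m" _ "Suc m"] mult_square_carrier)
  qed
  finally show ?case using unitary_mult[OF W unitary_oplus_one[OF U]] l by force
qed

section \<open>Positive semidefinite matrices and positive maps\<close>

lemma psdD:
  assumes "psd n A"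
  shows "A \<in> carrier_mat n n" "hermitian n A"
    "\<And>v. v \<in> carrier_vec n \<Longrightarrow> 0 \<le> Re (cinner v (A *\<^sub>v v))"
  using assms by (auto simp: psd_def hermitian_def)

lemma psd_sandwich:
  assumes G: "psd n G" and Z: "Z \<in> carrier_mat n n" and hZ: "adj Z = Z"
  shows "psd n (Z * G * Z)"
proof -
  have Gc: "G \<in> carrier_mat n n" and hG: "adj G = G"
    using assms by (auto simp: psd_def hermitian_def)
  have "adj (Z * G * Z) = Z * G * Z"
    using Z Gc hZ hG
    by (simp add: adj_mult[of _ n n _ n] assoc_mult_mat[of _ n n _ n _ n] mult_square_carrier)
  moreover have "0 \<le> Re (cinner v ((Z * G * Z) *\<^sub>v v))" if v: "v \<in> carrier_vec n" for v
  proof -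
    have "(Z * G * Z) *\<^sub>v v = Z *\<^sub>v (G *\<^sub>v (Z *\<^sub>v v))"
      using Z Gc v by (simp add: assoc_mult_mat_vec[of _ n n _ n] mult_square_carrier)
    hence "cinner v ((Z * G * Z) *\<^sub>v v) = cinner (adj Z *\<^sub>v v) (G *\<^sub>v (Z *\<^sub>v v))"
      using cinner_adj[OF Z v, of "G *\<^sub>v (Z *\<^sub>v v)"] Z Gc v by simp
    thus ?thesis using psdD(3)[OF G, of "Z *\<^sub>v v"] Z v hZ by simp
  qed
  ultimately show ?thesis unfolding psd_def hermitian_def using Z Gc by (simp add: mult_square_carrier)
qed

lemma sandwich_shift_expand:
  assumes W: "W \<in> carrier_mat n n" and G: "G \<in> carrier_mat n n"
  shows "(complex_of_real x \<cdot>\<^sub>m W + (-1) \<cdot>\<^sub>m 1\<^sub>m n) * G * (complex_of_real x \<cdot>\<^sub>m W + (-1) \<cdot>\<^sub>m 1\<^sub>m n) =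
    complex_of_real (x * x) \<cdot>\<^sub>m (W * G * W) +
      (complex_of_real (- x) \<cdot>\<^sub>m (W * G) + (complex_of_real (- x) \<cdot>\<^sub>m (G * W) + G))"
proof -
  note simps = mult_smult_assoc_mat[of _ n n _ n] mult_smult_distrib[of _ n n _ n] smult_smult_mat
    mult_square_carrier left_mult_one_mat right_mult_one_mat
  have 1: "(complex_of_real x \<cdot>\<^sub>m W + (-1) \<cdot>\<^sub>m 1\<^sub>m n) * G = complex_of_real x \<cdot>\<^sub>m (W * G) + (-1) \<cdot>\<^sub>m G"
    using W G by (simp add: add_mult_distrib_mat[of _ n n] simps)
  have a: "complex_of_real x \<cdot>\<^sub>m (W * G) * (complex_of_real x \<cdot>\<^sub>m W) = complex_of_real (x * x) \<cdot>\<^sub>m (W * G * W)"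
    using W G by (simp add: simps)
  have b: "complex_of_real x \<cdot>\<^sub>m (W * G) * ((-1) \<cdot>\<^sub>m 1\<^sub>m n) = complex_of_real (- x) \<cdot>\<^sub>m (W * G)"
    using W G by (simp add: simps)
  have c: "(-1) \<cdot>\<^sub>m G * (complex_of_real x \<cdot>\<^sub>m W) = complex_of_real (- x) \<cdot>\<^sub>m (G * W)"
    using W G by (simp add: simps)
  have d: "(-1) \<cdot>\<^sub>m G * ((-1) \<cdot>\<^sub>m 1\<^sub>m n) = G"
    using W G by (simp add: simps)
  show ?thesis unfolding 1 using W G
    by (subst mult_add_add_mat[of _ n]) (auto simp: a b c d mult_square_carrier)
qed

definition outer :: "nat \<Rightarrow> complex vec \<Rightarrow> complex mat" where
  "outer n v = mat n n (\<lambda>(i, j). v $ i * cnj (v $ j))"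

lemma outer_carrier [simp]: "outer n v \<in> carrier_mat n n"
  by (simp add: outer_def)

lemma mtr_outer_mult:
  assumes v: "v \<in> carrier_vec n" and B: "B \<in> carrier_mat n n"
  shows "mtr (outer n v * B) = cinner v (B *\<^sub>v v)"
proof -
  have "mtr (outer n v * B) = (\<Sum>i<n. \<Sum>k<n. v $ i * cnj (v $ k) * B $$ (k, i))"
    using v B by (simp add: mtr_def mat_sum_simps outer_def)
  also have "\<dots> = (\<Sum>k<n. \<Sum>i<n. cnj (v $ k) * (B $$ (k, i) * v $ i))"
    by (subst sum.swap) (simp add: mult_ac)
  also have "\<dots> = cinner v (B *\<^sub>v v)"
    using v B by (simp add: cinner_def mat_sum_simps sum_distrib_left)
  finally show ?thesis .
qed

lemma outer_mult_vec:
  assumes v: "v \<in> carrier_vec n" and w: "w \<in> carrier_vec n"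
  shows "outer n v *\<^sub>v w = cinner v w \<cdot>\<^sub>v v"
proof (rule eq_vecI)
  fix i assume "i < dim_vec (cinner v w \<cdot>\<^sub>v v)"
  hence i: "i < n" using v by simp
  have "(outer n v *\<^sub>v w) $ i = (\<Sum>j<n. v $ i * cnj (v $ j) * w $ j)"
    using i v w by (simp add: mat_sum_simps outer_def)
  also have "\<dots> = (\<Sum>j<n. cnj (v $ j) * w $ j) * v $ i"
    by (simp add: sum_distrib_left sum_distrib_right mult_ac)
  finally show "(outer n v *\<^sub>v w) $ i = (cinner v w \<cdot>\<^sub>v v) $ i" using i v by (simp add: cinner_def)
qed (use v in \<open>auto simp: outer_def\<close>)

lemma psd_outer:
  assumes v: "v \<in> carrier_vec n"
  shows "psd n (outer n v)"
proof -
  have "adj (outer n v) = outer n v" by (rule eq_matI) (auto simp: outer_def)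
  moreover have "0 \<le> Re (cinner w (outer n v *\<^sub>v w))" if w: "w \<in> carrier_vec n" for w
  proof -
    have "cinner w (outer n v *\<^sub>v w) = cinner v w * cinner w v"
      unfolding outer_mult_vec[OF v w] using v w by (simp add: cinner_smult_right)
    also have "\<dots> = cinner v w * cnj (cinner v w)" using v w by (subst cinner_cnj[symmetric]) auto
    finally show ?thesis by (simp add: complex_mult_cnj)
  qed
  ultimately show ?thesis unfolding psd_def hermitian_def by simp
qed

lemma cptp_psd:
  assumes "cptp n \<Phi>" "psd n M"
  shows "psd n (\<Phi> M)"
proof -
  have M: "M \<in> carrier_mat n n" using psdD(1)[OF assms(2)] .
  have \<Phi>M: "\<Phi> M \<in> carrier_mat n n"
    using assms(1) M by (auto simp: cptp_def Defs.linear_map_def)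
  have "psd (1 * n) (ampliate 1 n \<Phi> M)"
    using assms by (auto simp: cptp_def completely_positive_def)
  moreover have "mat n n (\<lambda>(a, b). M $$ ((i div n) * n + a, (j div n) * n + b)) = M"
    if "i < n" "j < n" for i j
    using M that by (intro eq_matI) auto
  hence "ampliate 1 n \<Phi> M = \<Phi> M"
    using \<Phi>M unfolding ampliate_def by (intro eq_matI) auto
  ultimately show ?thesis by simp
qed

lemma quadratic_form_two_coords:
  assumes A: "A \<in> carrier_mat n n" and ij: "i < n" "j < n"
    and v: "v = vec n (\<lambda>k. (if k = i then x else 0) + (if k = j then y else 0))"
  shows "cinner v (A *\<^sub>v v) =
    cnj x * x * A $$ (i, i) + cnj x * y * A $$ (i, j) + cnj y * x * A $$ (j, i) + cnj y * y * A $$ (j, j)"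
proof -
  have mult_if: "(a :: complex) * (if P then z else 0) = (if P then a * z else 0)" for a P z by simp
  have Av: "(A *\<^sub>v v) $ k = A $$ (k, i) * x + A $$ (k, j) * y" if k: "k < n" for k
  proof -
    have "(A *\<^sub>v v) $ k = (\<Sum>l<n. (if l = i then A $$ (k, i) * x else 0) + (if l = j then A $$ (k, j) * y else 0))"
      using A k v by (simp add: mat_sum_simps distrib_left mult_if sum.distrib)
    also have "\<dots> = A $$ (k, i) * x + A $$ (k, j) * y" using ij by (simp add: sum.distrib sum.delta)
    finally show ?thesis .
  qed
  have "cinner v (A *\<^sub>v v) = (\<Sum>k<n. (if k = i then cnj x * (A $$ (i, i) * x + A $$ (i, j) * y) else 0)
      + (if k = j then cnj y * (A $$ (j, i) * x + A $$ (j, j) * y) else 0))"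
    unfolding cinner_def using v Av by (intro sum.cong) (auto simp: distrib_right)
  also have "\<dots> = cnj x * (A $$ (i, i) * x + A $$ (i, j) * y) + cnj y * (A $$ (j, i) * x + A $$ (j, j) * y)"
    using ij by (simp add: sum.distrib)
  finally show ?thesis by (simp add: algebra_simps)
qed

text \<open>Polarization: test the quadratic form on \<open>x e\<^sub>i + y e\<^sub>j\<close> for
  \<open>(x, y) \<in> {(0, 1), (1, 0), (1, 1), (1, \<i>)}\<close>.\<close>

lemma adj_eq_if_real_quadratic_form:
  assumes A: "A \<in> carrier_mat n n"
    and real: "\<And>v. v \<in> carrier_vec n \<Longrightarrow> Im (cinner v (A *\<^sub>v v)) = 0"
  shows "adj A = A"
proof (rule eq_matI)
  fix i j assume "i < dim_row A" "j < dim_col A"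
  hence ij: "i < n" "j < n" using A by auto
  define q where "q x y = cinner (vec n (\<lambda>k. (if k = i then x else 0) + (if k = j then y else 0)))
     (A *\<^sub>v vec n (\<lambda>k. (if k = i then x else 0) + (if k = j then y else 0)))" for x y
  have qr: "Im (q x y) = 0" for x y unfolding q_def by (intro real) simp
  have qf: "q x y = cnj x * x * A $$ (i, i) + cnj x * y * A $$ (i, j) + cnj y * x * A $$ (j, i)
      + cnj y * y * A $$ (j, j)" for x y
    unfolding q_def using quadratic_form_two_coords[OF A ij] by blast
  have jj: "Im (A $$ (j, j)) = 0" using qr[of 0 1] unfolding qf by simp
  have ii: "Im (A $$ (i, i)) = 0" using qr[of 1 0] unfolding qf by simp
  have 1: "Im (A $$ (i, j) + A $$ (j, i)) = 0" using qr[of 1 1] ii jj unfolding qf by simp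
  have 2: "Re (A $$ (i, j)) - Re (A $$ (j, i)) = 0" using qr[of 1 \<i>] ii jj unfolding qf by simp
  show "adj A $$ (i, j) = A $$ (i, j)" using ij A 1 2 by (simp add: complex_eq_iff)
qed (use A in auto)

section \<open>Relative entropy and Klein's inequality\<close>

lemma Re_mtr_mult_udiag:
  assumes V: "V \<in> carrier_mat n n" and l: "length d = n" and M: "M \<in> carrier_mat n n"
  shows "Re (mtr (M * udiag V d)) = (\<Sum>b<n. d ! b * Re (cinner (col V b) (M *\<^sub>v col V b)))"
  unfolding mtr_mult_udiag[OF V l M] Re_sum by simp

definition overlap :: "complex mat \<Rightarrow> complex mat \<Rightarrow> nat \<Rightarrow> nat \<Rightarrow> real" where
  "overlap U V a b = Re (cnj (cinner (col U a) (col V b)) * cinner (col U a) (col V b))"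

lemma overlap_nonneg: "overlap U V a b \<ge> 0"
  unfolding overlap_def by (simp add: complex_mult_cnj)

lemma overlap_row_sum:
  assumes U: "unitary n U" and V: "unitary n V" and a: "a < n"
  shows "(\<Sum>b<n. overlap U V a b) = 1"
proof -
  have "overlap U V a b = Re (cnj (cinner (col V b) (col U a)) * cinner (col V b) (col U a))"
    if b: "b < n" for b
  proof -
    have "cinner (col U a) (col V b) = cnj (cinner (col V b) (col U a))"
      using unitaryD(1)[OF U] unitaryD(1)[OF V] a b by (subst cinner_cnj) auto
    thus ?thesis unfolding overlap_def by (simp add: mult.commute)
  qed
  hence "(\<Sum>b<n. overlap U V a b) = Re (\<Sum>b<n. cnj (cinner (col V b) (col U a)) * cinner (col V b) (col U a))"
    unfolding Re_sum by simp
  also have "\<dots> = Re (cinner (col U a) (col U a))"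
    using parseval[OF V, of "col U a"] unitaryD(1)[OF U] a by simp
  finally show ?thesis using unitary_cinner_col[OF U a a] by simp
qed

lemma overlap_col_sum:
  assumes U: "unitary n U" and V: "unitary n V" and b: "b < n"
  shows "(\<Sum>a<n. overlap U V a b) = 1"
proof -
  have "(\<Sum>a<n. overlap U V a b) = Re (cinner (col V b) (col V b))"
    unfolding overlap_def Re_sum[symmetric] using parseval[OF U, of "col V b"] unitaryD(1)[OF V] b
    by simp
  thus ?thesis using unitary_cinner_col[OF V b b] by simp
qed

lemma Re_cinner_udiag_overlap:
  assumes U: "U \<in> carrier_mat n n" and V: "V \<in> carrier_mat n n" and l: "length p = n" and b: "b < n"
  shows "Re (cinner (col V b) (udiag U p *\<^sub>v col V b)) = (\<Sum>a<n. p ! a * overlap U V a b)"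
proof -
  have "cinner (col V b) (udiag U p *\<^sub>v col V b) =
      (\<Sum>a<n. complex_of_real (p ! a) * (cnj (cinner (col U a) (col V b)) * cinner (col U a) (col V b)))"
    using V b by (intro cinner_udiag[OF U l]) simp
  thus ?thesis unfolding overlap_def Re_sum by simp
qed

lemma doubly_stochastic_gibbs:
  fixes p q :: "nat \<Rightarrow> real" and N :: "nat \<Rightarrow> nat \<Rightarrow> real"
  assumes p: "\<forall>a<n. p a > 0" "(\<Sum>a<n. p a) = 1" and q: "\<forall>b<n. q b > 0" "(\<Sum>b<n. q b) = 1"
    and N: "\<forall>a b. N a b \<ge> 0" "\<forall>a<n. (\<Sum>b<n. N a b) = 1" "\<forall>b<n. (\<Sum>a<n. N a b) = 1"
  shows "(\<Sum>a<n. \<Sum>b<n. p a * N a b * ln (q b)) \<le> (\<Sum>a<n. p a * ln (p a))"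
proof -
  have "(\<Sum>a<n. p a * ln (p a)) = (\<Sum>a<n. \<Sum>b<n. p a * N a b * ln (p a))"
    using N(2) by (simp add: sum_distrib_left[symmetric] sum_distrib_right[symmetric] mult.commute)
  hence "(\<Sum>a<n. \<Sum>b<n. p a * N a b * ln (q b)) - (\<Sum>a<n. p a * ln (p a))
      = (\<Sum>a<n. \<Sum>b<n. p a * N a b * (ln (q b) - ln (p a)))"
    by (simp add: sum_subtractf right_diff_distrib)
  also have "\<dots> \<le> (\<Sum>a<n. \<Sum>b<n. p a * N a b * (q b / p a - 1))"
  proof (intro sum_mono)
    fix a b assume "a \<in> {..<n}" "b \<in> {..<n}"
    hence pa: "p a > 0" and qb: "q b > 0" using p q by auto
    have "ln (q b) - ln (p a) \<le> q b / p a - 1"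
      using pa qb ln_le_minus_one[of "q b / p a"] by (simp add: ln_div)
    thus "p a * N a b * (ln (q b) - ln (p a)) \<le> p a * N a b * (q b / p a - 1)"
      using pa N(1) by (intro mult_left_mono) auto
  qed
  also have "\<dots> = (\<Sum>a<n. \<Sum>b<n. N a b * q b) - (\<Sum>a<n. p a * (\<Sum>b<n. N a b))"
  proof -
    have "p a * N a b * (q b / p a - 1) = N a b * q b - p a * N a b" if "a < n" for a b
    proof -
      have "p a \<noteq> 0" using p(1) that by auto
      thus ?thesis by (simp add: field_simps)
    qed
    hence "(\<Sum>a<n. \<Sum>b<n. p a * N a b * (q b / p a - 1)) = (\<Sum>a<n. \<Sum>b<n. N a b * q b - p a * N a b)"
      by (intro sum.cong refl) auto
    thus ?thesis by (simp add: sum_subtractf sum_distrib_left)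
  qed
  also have "(\<Sum>a<n. \<Sum>b<n. N a b * q b) = (\<Sum>b<n. (\<Sum>a<n. N a b) * q b)"
    by (subst sum.swap) (simp add: sum_distrib_right)
  also have "\<dots> = 1" using q(2) N(3) by simp
  also have "(\<Sum>a<n. p a * (\<Sum>b<n. N a b)) = 1" using p(2) N(2) by simp
  finally show ?thesis by simp
qed

lemma klein_inequality:
  assumes U: "unitary n U" and V: "unitary n V"
    and p: "length p = n" "\<forall>a<n. p ! a > 0" "sum_list p = 1"
    and q: "length q = n" "\<forall>b<n. q ! b > 0" "sum_list q = 1"
  shows "Re (mtr (udiag U p * udiag V (map ln q))) \<le> (\<Sum>a<n. p ! a * ln (p ! a))"
proof -
  have Uc: "U \<in> carrier_mat n n" and Vc: "V \<in> carrier_mat n n"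
    using unitaryD U V by auto
  have lq: "length (map ln q) = n" using q(1) by simp
  have "Re (mtr (udiag U p * udiag V (map ln q))) =
      (\<Sum>b<n. ln (q ! b) * (\<Sum>a<n. p ! a * overlap U V a b))"
    unfolding Re_mtr_mult_udiag[OF Vc lq udiag_carrier[OF Uc p(1)]] using q(1)
    by (intro sum.cong refl) (simp_all add: Re_cinner_udiag_overlap[OF Uc Vc p(1)])
  also have "\<dots> = (\<Sum>a<n. \<Sum>b<n. p ! a * overlap U V a b * ln (q ! b))"
    by (subst sum.swap) (simp add: sum_distrib_left sum_distrib_right mult_ac)
  also have "\<dots> \<le> (\<Sum>a<n. p ! a * ln (p ! a))"
    using p q overlap_nonneg overlap_row_sum[OF U V] overlap_col_sum[OF U V]
    by (intro doubly_stochastic_gibbs) (auto simp: sum_list_sum_nth atLeast0LessThan)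
  finally show ?thesis .
qed

lemma rel_ent_udiag:
  assumes U: "unitary n U" and V: "unitary n V"
    and p: "length p = n" "\<forall>a<n. p ! a > 0" "sum_list p = 1"
    and d: "length d = n" "\<forall>b<n. d ! b > 0"
  shows "rel_ent (udiag U p) (udiag V d) =
    ereal ((\<Sum>a<n. p ! a * ln (p ! a)) - Re (mtr (udiag U p * udiag V (map ln d))))"
proof -
  have Uc: "U \<in> carrier_mat n n" and Vc: "V \<in> carrier_mat n n"
    using unitaryD U V by auto
  let ?\<rho> = "udiag U p"
  have supp: "supp ?\<rho> \<subseteq> supp (udiag V d)"
    unfolding supp_udiag_pos[OF V d] using supp_subset_carrier[OF udiag_carrier[OF Uc p(1)]] .
  have ln_pos: "map (\<lambda>x. if 0 < x then ln x else 0) ls = map ln ls" if "\<forall>i<length ls. ls ! i > 0" for ls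
    using that by (intro map_cong refl) (auto simp: in_set_conv_nth)
  have ln_p: "map (\<lambda>x. if 0 < x then ln x else 0) p = map ln p" by (rule ln_pos) (use p(1,2) in auto)
  have ln_\<rho>: "mat_ln ?\<rho> = udiag U (map ln p)"
    unfolding mat_ln_def mat_fun_udiag[OF U p(1)] ln_p by (rule refl)
  have ln_d: "map (\<lambda>x. if 0 < x then ln x else 0) d = map ln d" by (rule ln_pos) (use d in auto)
  have ln_\<sigma>: "mat_ln (udiag V d) = udiag V (map ln d)"
    unfolding mat_ln_def mat_fun_udiag[OF V d(1)] ln_d by (rule refl)
  have lp: "length (map ln p) = n" using p(1) by simp
  have entropy: "Re (mtr (?\<rho> * udiag U (map ln p))) = (\<Sum>a<n. p ! a * ln (p ! a))"
    unfolding Re_mtr_mult_udiag[OF Uc lp udiag_carrier[OF Uc p(1)]] using p(1)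
    by (intro sum.cong refl) (simp_all add: cinner_udiag_col[OF U p(1)])
  have "mtr (?\<rho> * mat_ln ?\<rho> - ?\<rho> * mat_ln (udiag V d)) =
      mtr (?\<rho> * udiag U (map ln p)) - mtr (?\<rho> * udiag V (map ln d))"
    unfolding ln_\<rho> ln_\<sigma> using Uc Vc p(1) d(1) by (intro mtr_diff[of _ n]) (auto simp: mult_square_carrier)
  moreover have "mtr ?\<rho> = 1" using mtr_udiag[OF U p(1)] p(3) by simp
  ultimately show ?thesis unfolding rel_ent_def using supp entropy by simp
qed

section \<open>Logarithmic interpolation\<close>

lemma normalized_list_pos:
  fixes ls :: "real list"
  assumes pos: "\<forall>i<length ls. ls ! i > 0" and ne: "ls \<noteq> []"
  shows "sum_list ls > 0" "\<forall>i<length ls. map (\<lambda>x. x / sum_list ls) ls ! i > 0"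
    "sum_list (map (\<lambda>x. x / sum_list ls) ls) = 1"
proof -
  have "sum_list ls = (\<Sum>i<length ls. ls ! i)" by (simp add: sum_list_sum_nth atLeast0LessThan)
  also have "\<dots> > 0" using pos ne by (intro sum_pos) auto
  finally show S: "sum_list ls > 0" .
  thus "\<forall>i<length ls. map (\<lambda>x. x / sum_list ls) ls ! i > 0" using pos by simp
  show "sum_list (map (\<lambda>x. x / sum_list ls) ls) = 1"
    using S by (simp add: sum_list_sum_nth atLeast0LessThan sum_divide_distrib[symmetric])
qed

lemma affine_mix_pos:
  fixes t r :: real
  assumes "0 \<le> t" "t \<le> 1" "r > 0"
  shows "t * r + 1 - t > 0"
proof (cases "t = 1")
  case False
  hence "t < 1" using assms by simp
  moreover have "t * r \<ge> 0" using assms by simp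
  ultimately show ?thesis by linarith
qed (use assms in simp)

definition log_mix :: "(nat \<Rightarrow> real) \<Rightarrow> (nat \<Rightarrow> real) \<Rightarrow> nat \<Rightarrow> real \<Rightarrow> real" where
  "log_mix w r n = (\<lambda>t. \<Sum>b<n. w b * ln (t * r b + 1 - t))"

lemma log_mix_0 [simp]: "log_mix w r n 0 = 0"
  by (simp add: log_mix_def)

lemma log_mix_1 [simp]: "log_mix w r n 1 = (\<Sum>b<n. w b * ln (r b))"
  by (simp add: log_mix_def)

lemma continuous_on_log_mix:
  assumes "\<forall>b<n. r b > 0"
  shows "continuous_on {0..1} (log_mix w r n)"
proof -
  have "t * r b + 1 - t \<noteq> 0" if "t \<in> {0..1}" "b < n" for t b
    using affine_mix_pos[of t "r b"] assms that by force
  thus ?thesis unfolding log_mix_def by (intro continuous_intros) auto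
qed

lemma log_mix_has_derivative:
  assumes pos: "\<forall>b<n. t * r b + 1 - t > 0"
  shows "(log_mix w r n has_real_derivative (\<Sum>b<n. w b * ((r b - 1) / (t * r b + 1 - t)))) (at t)"
proof -
  have "((\<lambda>t. ln (t * r b + 1 - t)) has_real_derivative ((r b - 1) / (t * r b + 1 - t))) (at t)"
    if "b < n" for b
    using pos that by (auto intro!: derivative_eq_intros simp: field_simps)
  thus ?thesis unfolding log_mix_def by (intro DERIV_sum DERIV_cmult) auto
qed

lemma log_mix_derivative_eq:
  fixes w r :: "nat \<Rightarrow> real" and t :: real
  assumes pos: "\<forall>b<n. t * r b + 1 - t > 0" and t: "t \<noteq> 0" and w: "(\<Sum>b<n. w b) = 1"
  shows "(\<Sum>b<n. w b * ((r b - 1) / (t * r b + 1 - t))) = (1 - (\<Sum>b<n. w b / (t * r b + 1 - t))) / t"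
proof -
  have "w b * ((r b - 1) / (t * r b + 1 - t)) = (w b - w b / (t * r b + 1 - t)) / t" if "b < n" for b
  proof -
    let ?y = "t * r b + 1 - t"
    have "?y > 0" using pos that by blast
    hence "?y \<noteq> 0" by linarith
    hence "w b - w b / ?y = w b * (t * (r b - 1)) / ?y" by (simp add: field_simps)
    thus ?thesis using t by (simp add: field_simps)
  qed
  hence "(\<Sum>b<n. w b * ((r b - 1) / (t * r b + 1 - t))) = (\<Sum>b<n. (w b - w b / (t * r b + 1 - t)) / t)"
    by (intro sum.cong) auto
  also have "\<dots> = (1 - (\<Sum>b<n. w b / (t * r b + 1 - t))) / t"
    unfolding sum_divide_distrib[symmetric] sum_subtractf w ..
  finally show ?thesis .
qed

section \<open>Channels and a faithful state\<close>

locale channel =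
  fixes n :: nat and \<Phi> \<Phi>d :: "complex mat \<Rightarrow> complex mat"
  assumes cptp: "cptp n \<Phi>" and dual: "trace_dual n \<Phi> \<Phi>d"
begin

lemma Phi_carrier [simp]: "X \<in> carrier_mat n n \<Longrightarrow> \<Phi> X \<in> carrier_mat n n"
  using cptp by (auto simp: cptp_def Defs.linear_map_def)

lemma Phi_add: "X \<in> carrier_mat n n \<Longrightarrow> Y \<in> carrier_mat n n \<Longrightarrow> \<Phi> (X + Y) = \<Phi> X + \<Phi> Y"
  using cptp by (auto simp: cptp_def Defs.linear_map_def)

lemma Phi_smult: "X \<in> carrier_mat n n \<Longrightarrow> \<Phi> (c \<cdot>\<^sub>m X) = c \<cdot>\<^sub>m \<Phi> X"
  using cptp by (auto simp: cptp_def Defs.linear_map_def)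

lemma mtr_Phi: "X \<in> carrier_mat n n \<Longrightarrow> mtr (\<Phi> X) = mtr X"
  using cptp by (auto simp: cptp_def trace_preserving_def)

lemma Phi_psd: "psd n X \<Longrightarrow> psd n (\<Phi> X)"
  using cptp_psd[OF cptp] .

lemma Phid_carrier [simp]: "Y \<in> carrier_mat n n \<Longrightarrow> \<Phi>d Y \<in> carrier_mat n n"
  using dual by (auto simp: trace_dual_def)

lemma mtr_Phi_mult: "X \<in> carrier_mat n n \<Longrightarrow> Y \<in> carrier_mat n n \<Longrightarrow> mtr (\<Phi> X * Y) = mtr (X * \<Phi>d Y)"
  using dual by (auto simp: trace_dual_def)

lemma cinner_Phid:
  assumes v: "v \<in> carrier_vec n" and Y: "Y \<in> carrier_mat n n"
  shows "cinner v (\<Phi>d Y *\<^sub>v v) = mtr (\<Phi> (outer n v) * Y)"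
  using mtr_outer_mult[OF v Phid_carrier[OF Y]] mtr_Phi_mult[OF outer_carrier Y] by simp

lemma Re_cinner_Phi_combination:
  assumes A: "A \<in> carrier_mat n n" "B \<in> carrier_mat n n" "C \<in> carrier_mat n n" "D \<in> carrier_mat n n"
    and u: "u \<in> carrier_vec n"
  shows "Re (cinner u (\<Phi> (complex_of_real k1 \<cdot>\<^sub>m A + (complex_of_real k2 \<cdot>\<^sub>m B + (complex_of_real k3 \<cdot>\<^sub>m C + D))) *\<^sub>v u)) =
    k1 * Re (cinner u (\<Phi> A *\<^sub>v u)) + k2 * Re (cinner u (\<Phi> B *\<^sub>v u)) + k3 * Re (cinner u (\<Phi> C *\<^sub>v u))
      + Re (cinner u (\<Phi> D *\<^sub>v u))"
proof -
  have "\<Phi> (complex_of_real k1 \<cdot>\<^sub>m A + (complex_of_real k2 \<cdot>\<^sub>m B + (complex_of_real k3 \<cdot>\<^sub>m C + D))) =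
      complex_of_real k1 \<cdot>\<^sub>m \<Phi> A + (complex_of_real k2 \<cdot>\<^sub>m \<Phi> B + (complex_of_real k3 \<cdot>\<^sub>m \<Phi> C + \<Phi> D))"
    using A by (simp add: Phi_add Phi_smult)
  thus ?thesis using A u by (simp add: cinner_add_mat[of _ n] cinner_smult_mat[of _ n])
qed

end

locale channel_state = channel +
  fixes U :: "complex mat" and p :: "real list"
  assumes U: "unitary n U" and length_p: "length p = n" and p_pos: "\<forall>a<n. p ! a > 0"
    and sum_p: "sum_list p = 1"
begin

definition "\<rho> = udiag U p"

definition "\<sigma> = \<Phi>d \<rho>"

definition "Phi_rho_diag a = Re (cinner (col U a) (\<Phi> \<rho> *\<^sub>v col U a))"

lemma U_carrier [simp]: "U \<in> carrier_mat n n"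
  using unitaryD[OF U] by auto

lemma rho_carrier [simp]: "\<rho> \<in> carrier_mat n n"
  unfolding \<rho>_def using length_p by simp

lemma sigma_carrier [simp]: "\<sigma> \<in> carrier_mat n n"
  unfolding \<sigma>_def by simp

lemma rho_psd: "psd n \<rho>"
  unfolding \<rho>_def using psd_udiag[OF U length_p] p_pos by (simp add: less_imp_le)

lemma mtr_rho: "mtr \<rho> = 1"
  unfolding \<rho>_def mtr_udiag[OF U length_p] sum_p by simp

lemma mtr_mult_rho:
  "M \<in> carrier_mat n n \<Longrightarrow> mtr (M * \<rho>) = (\<Sum>a<n. complex_of_real (p ! a) * cinner (col U a) (M *\<^sub>v col U a))"
  unfolding \<rho>_def using mtr_mult_udiag[OF U_carrier length_p] .

lemma Re_mtr_rho_udiag_U: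
  assumes "length d = n"
  shows "Re (mtr (\<rho> * udiag U d)) = (\<Sum>a<n. d ! a * p ! a)"
  unfolding Re_mtr_mult_udiag[OF U_carrier assms rho_carrier] unfolding \<rho>_def
  by (intro sum.cong refl) (simp add: cinner_udiag_col[OF U length_p])

lemma Re_mtr_Phi_rho_udiag_U:
  assumes "length d = n"
  shows "Re (mtr (\<Phi> \<rho> * udiag U d)) = (\<Sum>a<n. d ! a * Phi_rho_diag a)"
  unfolding Re_mtr_mult_udiag[OF U_carrier assms Phi_carrier[OF rho_carrier]] Phi_rho_diag_def ..

lemma sum_Phi_rho_diag: "(\<Sum>a<n. Phi_rho_diag a) = 1"
proof -
  have "mtr (\<Phi> \<rho>) = 1" using mtr_Phi[OF rho_carrier] mtr_rho by simp
  thus ?thesis unfolding Phi_rho_diag_def Re_sum[symmetric]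
    using mtr_unitary_basis[OF U Phi_carrier[OF rho_carrier]] by simp
qed

lemma cinner_sigma:
  assumes v: "v \<in> carrier_vec n"
  shows "cinner v (\<sigma> *\<^sub>v v) =
    complex_of_real (\<Sum>a<n. p ! a * Re (cinner (col U a) (\<Phi> (outer n v) *\<^sub>v col U a)))"
proof -
  let ?M = "\<Phi> (outer n v)"
  have M: "psd n ?M" using Phi_psd[OF psd_outer[OF v]] .
  have "cinner v (\<sigma> *\<^sub>v v) = mtr (?M * \<rho>)" unfolding \<sigma>_def using cinner_Phid[OF v rho_carrier] .
  also have "\<dots> = (\<Sum>a<n. complex_of_real (p ! a) * cinner (col U a) (?M *\<^sub>v col U a))"
    by (rule mtr_mult_rho) simp
  also have "\<dots> = (\<Sum>a<n. complex_of_real (p ! a * Re (cinner (col U a) (?M *\<^sub>v col U a))))"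
    by (intro sum.cong refl, subst hermitian_cinner_of_real[OF psdD(2)[OF M]]) auto
  finally show ?thesis by simp
qed

lemma sigma_hermitian: "hermitian n \<sigma>"
proof -
  have "adj \<sigma> = \<sigma>"
    by (rule adj_eq_if_real_quadratic_form[OF sigma_carrier]) (simp add: cinner_sigma)
  thus ?thesis unfolding hermitian_def by simp
qed

text \<open>\<open>\<sigma>\<close> is positive definite: \<open>\<Phi>(|v\<rangle>\<langle>v|)\<close> is positive with trace \<open>\<langle>v, v\<rangle>\<close> by trace
  preservation, so it has weight on some eigenvector of the faithful state \<open>\<rho>\<close>.\<close>

lemma sigma_pos_definite:
  assumes v: "v \<in> carrier_vec n" and v1: "Re (cinner v v) = 1"
  shows "Re (cinner v (\<sigma> *\<^sub>v v)) > 0"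
proof -
  let ?M = "\<Phi> (outer n v)" and ?w = "\<lambda>a. Re (cinner (col U a) (\<Phi> (outer n v) *\<^sub>v col U a))"
  have M: "psd n ?M" using Phi_psd[OF psd_outer[OF v]] .
  have w_nonneg: "?w a \<ge> 0" if "a < n" for a using psdD(3)[OF M] that by simp
  have "mtr ?M = mtr (outer n v * 1\<^sub>m n)"
    using mtr_Phi[of "outer n v"] right_mult_one_mat[OF outer_carrier] by simp
  also have "\<dots> = cinner v v" using mtr_outer_mult[OF v one_carrier_mat] v by simp
  finally have "Re (mtr ?M) = 1" using v1 by simp
  hence sum_w: "(\<Sum>a<n. ?w a) = 1" unfolding mtr_unitary_basis[OF U psdD(1)[OF M]] Re_sum .
  have "\<exists>a<n. ?w a \<noteq> 0"
  proof (rule ccontr)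
    assume "\<not> (\<exists>a<n. ?w a \<noteq> 0)"
    hence "(\<Sum>a<n. ?w a) = 0" by simp
    with sum_w show False by simp
  qed
  then obtain a where a: "a < n" "?w a \<noteq> 0" by blast
  hence a_pos: "?w a > 0" using w_nonneg[OF a(1)] by simp
  have "(\<Sum>a<n. p ! a * ?w a) > 0"
    using a(1) a_pos p_pos w_nonneg by (intro sum_pos2[of _ a]) (auto intro: mult_nonneg_nonneg less_imp_le)
  thus ?thesis unfolding cinner_sigma[OF v] by simp
qed

lemma energy_drop_gibbs:
  assumes \<beta>: "\<beta> \<noteq> 0" and l: "length l = n" and gibbs: "\<forall>a<n. ln (p ! a) = - \<beta> * l ! a - c"
  shows "Re (mtr (\<rho> * udiag U l)) - Re (mtr (\<Phi> \<rho> * udiag U l)) =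
    (Re (mtr (\<Phi> \<rho> * udiag U (map ln p))) - (\<Sum>a<n. p ! a * ln (p ! a))) / \<beta>"
proof -
  have l_eq: "l ! a = - (ln (p ! a) + c) / \<beta>" if "a < n" for a
    using gibbs that \<beta> by (simp add: field_simps)
  have "Re (mtr (\<rho> * udiag U l)) - Re (mtr (\<Phi> \<rho> * udiag U l)) = (\<Sum>a<n. l ! a * p ! a - l ! a * Phi_rho_diag a)"
    unfolding Re_mtr_rho_udiag_U[OF l] Re_mtr_Phi_rho_udiag_U[OF l] by (simp add: sum_subtractf)
  also have "\<dots> = (\<Sum>a<n. (Phi_rho_diag a * ln (p ! a) - p ! a * ln (p ! a) + c * (Phi_rho_diag a - p ! a)) / \<beta>)"
  proof (intro sum.cong refl)
    fix a assume "a \<in> {..<n}"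
    hence la: "l ! a = - (ln (p ! a) + c) / \<beta>" using l_eq by simp
    show "l ! a * p ! a - l ! a * Phi_rho_diag a =
        (Phi_rho_diag a * ln (p ! a) - p ! a * ln (p ! a) + c * (Phi_rho_diag a - p ! a)) / \<beta>"
      unfolding la using \<beta> by (simp add: field_simps)
  qed
  also have "\<dots> = ((\<Sum>a<n. Phi_rho_diag a * ln (p ! a)) - (\<Sum>a<n. p ! a * ln (p ! a))
      + c * ((\<Sum>a<n. Phi_rho_diag a) - (\<Sum>a<n. p ! a))) / \<beta>"
    by (simp add: sum_divide_distrib[symmetric] sum.distrib sum_subtractf sum_distrib_left right_diff_distrib)
  also have "(\<Sum>a<n. p ! a) = 1" using sum_p length_p by (simp add: sum_list_sum_nth atLeast0LessThan)
  also have "(\<Sum>a<n. Phi_rho_diag a * ln (p ! a)) = Re (mtr (\<Phi> \<rho> * udiag U (map ln p)))"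
    using Re_mtr_Phi_rho_udiag_U[of "map ln p"] length_p by (simp add: mult.commute)
  finally show ?thesis unfolding sum_Phi_rho_diag by simp
qed

lemma Phi_sandwich_diag_nonneg:
  assumes W: "W \<in> carrier_mat n n" "adj W = W" and a: "a < n"
  shows "0 \<le> x * x * Re (cinner (col U a) (\<Phi> (W * \<rho> * W) *\<^sub>v col U a))
    - x * Re (cinner (col U a) (\<Phi> (W * \<rho>) *\<^sub>v col U a))
    - x * Re (cinner (col U a) (\<Phi> (\<rho> * W) *\<^sub>v col U a)) + Phi_rho_diag a"
proof -
  define Z where "Z = complex_of_real x \<cdot>\<^sub>m W + (-1) \<cdot>\<^sub>m 1\<^sub>m n"
  have Z: "Z \<in> carrier_mat n n" "adj Z = Z"
    unfolding Z_def using W by (auto simp: adj_add[of _ n n] adj_smult)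
  have u: "col U a \<in> carrier_vec n" using a by simp
  have expand: "Z * \<rho> * Z = complex_of_real (x * x) \<cdot>\<^sub>m (W * \<rho> * W) +
      (complex_of_real (- x) \<cdot>\<^sub>m (W * \<rho>) + (complex_of_real (- x) \<cdot>\<^sub>m (\<rho> * W) + \<rho>))"
    unfolding Z_def by (rule sandwich_shift_expand[OF W(1) rho_carrier])
  have "Re (cinner (col U a) (\<Phi> (Z * \<rho> * Z) *\<^sub>v col U a)) =
      x * x * Re (cinner (col U a) (\<Phi> (W * \<rho> * W) *\<^sub>v col U a))
      + (- x) * Re (cinner (col U a) (\<Phi> (W * \<rho>) *\<^sub>v col U a))
      + (- x) * Re (cinner (col U a) (\<Phi> (\<rho> * W) *\<^sub>v col U a)) + Phi_rho_diag a"
    unfolding expand Phi_rho_diag_def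
    by (rule Re_cinner_Phi_combination) (use W(1) u in \<open>auto simp: mult_square_carrier\<close>)
  moreover have "0 \<le> Re (cinner (col U a) (\<Phi> (Z * \<rho> * Z) *\<^sub>v col U a))"
    using psdD(3)[OF Phi_psd[OF psd_sandwich[OF rho_psd Z]] u] .
  ultimately show ?thesis by simp
qed

text \<open>Divide by \<open>x\<^sub>a = t p\<^sub>a + 1 - t\<close> and sum over the eigenbasis of \<open>\<rho>\<close>;
  trace duality turns the \<open>p\<^sub>a\<close>-weighted part into a trace against \<open>\<sigma>\<close>.\<close>

lemma Phi_sandwich_trace_nonneg:
  assumes W: "W \<in> carrier_mat n n" "adj W = W" and t: "0 \<le> t" "t \<le> 1"
  shows "0 \<le> t * Re (mtr (W * \<rho> * W * \<sigma>)) + (1 - t) * Re (mtr (W * \<rho> * W))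
    - Re (mtr (W * \<rho>)) - Re (mtr (\<rho> * W)) + (\<Sum>a<n. Phi_rho_diag a / (t * p ! a + 1 - t))"
proof -
  define x where "x a = t * p ! a + 1 - t" for a
  have x_pos: "x a > 0" if "a < n" for a
    unfolding x_def using affine_mix_pos[OF t] p_pos that by simp
  define R where "R M a = Re (cinner (col U a) (\<Phi> M *\<^sub>v col U a))" for M a
  have sum_R: "(\<Sum>a<n. R M a) = Re (mtr M)" if "M \<in> carrier_mat n n" for M
    unfolding R_def Re_sum[symmetric] using mtr_unitary_basis[OF U Phi_carrier[OF that]] mtr_Phi[OF that]
    by simp
  have WrW: "W * \<rho> * W \<in> carrier_mat n n" using W(1) by (simp add: mult_square_carrier)
  have "0 \<le> (\<Sum>a<n. (x a * x a * R (W * \<rho> * W) a - x a * R (W * \<rho>) a - x a * R (\<rho> * W) a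
      + Phi_rho_diag a) / x a)"
    using Phi_sandwich_diag_nonneg[OF W] x_pos unfolding R_def by (intro sum_nonneg divide_nonneg_pos) auto
  also have "\<dots> = (\<Sum>a<n. x a * R (W * \<rho> * W) a) - (\<Sum>a<n. R (W * \<rho>) a) - (\<Sum>a<n. R (\<rho> * W) a)
      + (\<Sum>a<n. Phi_rho_diag a / x a)"
  proof -
    have "(x a * x a * R (W * \<rho> * W) a - x a * R (W * \<rho>) a - x a * R (\<rho> * W) a + Phi_rho_diag a) / x a
        = x a * R (W * \<rho> * W) a - R (W * \<rho>) a - R (\<rho> * W) a + Phi_rho_diag a / x a" if "a < n" for a
      using x_pos[OF that] by (simp add: field_simps)
    thus ?thesis by (simp add: sum.distrib sum_subtractf)
  qed
  also have "(\<Sum>a<n. x a * R (W * \<rho> * W) a) = t * Re (mtr (W * \<rho> * W * \<sigma>)) + (1 - t) * Re (mtr (W * \<rho> * W))"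
  proof -
    have "Re (mtr (W * \<rho> * W * \<sigma>)) = Re (mtr (\<Phi> (W * \<rho> * W) * \<rho>))"
      unfolding \<sigma>_def using mtr_Phi_mult[OF WrW rho_carrier] by simp
    also have "\<dots> = (\<Sum>a<n. p ! a * R (W * \<rho> * W) a)"
      unfolding mtr_mult_rho[OF Phi_carrier[OF WrW]] R_def Re_sum by simp
    finally have "Re (mtr (W * \<rho> * W * \<sigma>)) = (\<Sum>a<n. p ! a * R (W * \<rho> * W) a)" .
    thus ?thesis unfolding x_def sum_R[OF WrW, symmetric]
      by (simp add: algebra_simps sum.distrib sum_distrib_left sum_subtractf)
  qed
  also have "(\<Sum>a<n. R (W * \<rho>) a) = Re (mtr (W * \<rho>))" using W(1) by (simp add: sum_R mult_square_carrier)
  also have "(\<Sum>a<n. R (\<rho> * W) a) = Re (mtr (\<rho> * W))" using W(1) by (simp add: sum_R mult_square_carrier)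
  finally show ?thesis unfolding x_def .
qed

end

section \<open>The eigenbasis of the dual image\<close>

locale channel_state_dual_eigen = channel_state +
  fixes V :: "complex mat" and s :: "real list"
  assumes V: "unitary n V" and length_s: "length s = n" and sigma_eq: "\<sigma> = udiag V s"
begin

definition "rho_diag_V b = Re (cinner (col V b) (\<rho> *\<^sub>v col V b))"

lemma V_carrier [simp]: "V \<in> carrier_mat n n"
  using unitaryD[OF V] by auto

lemma s_pos:
  assumes b: "b < n"
  shows "s ! b > 0"
proof -
  have "Re (cinner (col V b) (\<sigma> *\<^sub>v col V b)) > 0"
    using sigma_pos_definite[of "col V b"] unitary_cinner_col[OF V b b] b by simp
  thus ?thesis unfolding sigma_eq cinner_udiag_col[OF V length_s b] by simp
qed

lemma sum_s_pos: "sum_list s > 0"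
proof -
  have "n > 0" using length_p sum_p by (cases n) auto
  have "sum_list s = (\<Sum>b<n. s ! b)" using length_s by (simp add: sum_list_sum_nth atLeast0LessThan)
  also have "\<dots> > 0" using \<open>n > 0\<close> s_pos by (intro sum_pos) auto
  finally show ?thesis .
qed

lemma Re_mtr_rho_udiag_V:
  assumes "length d = n"
  shows "Re (mtr (\<rho> * udiag V d)) = (\<Sum>b<n. d ! b * rho_diag_V b)"
  unfolding Re_mtr_mult_udiag[OF V_carrier assms rho_carrier] rho_diag_V_def ..

lemma sum_rho_diag_V: "(\<Sum>b<n. rho_diag_V b) = 1"
  using mtr_rho unfolding mtr_unitary_basis[OF V rho_carrier] rho_diag_V_def Re_sum[symmetric]
  by simp

text \<open>A Choi-type inequality \<open>Tr[\<rho> \<Phi>\<^sup>\<dagger>(X)\<^sup>-\<^sup>1] \<le> Tr[\<Phi>(\<rho>) X\<^sup>-\<^sup>1]\<close> for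
  \<open>X = t \<rho> + (1 - t)\<close>; as \<open>\<Phi>\<^sup>\<dagger>\<close> is unital, \<open>\<Phi>\<^sup>\<dagger>(X) = t \<sigma> + (1 - t)\<close>, and
  \<open>W = \<Phi>\<^sup>\<dagger>(X)\<^sup>-\<^sup>1\<close> is taken above.\<close>

lemma choi_trace_inequality:
  assumes t: "0 \<le> t" "t \<le> 1"
  shows "(\<Sum>b<n. rho_diag_V b / (t * s ! b + 1 - t)) \<le> (\<Sum>a<n. Phi_rho_diag a / (t * p ! a + 1 - t))"
proof -
  define f where "f r = 1 / (t * r + 1 - t)" for r
  have f: "f (s ! b) * (t * s ! b + 1 - t) = 1" if "b < n" for b
    unfolding f_def using affine_mix_pos[OF t s_pos[OF that]] by simp
  define W where "W = udiag V (map f s)"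
  have W: "W \<in> carrier_mat n n" "adj W = W"
    unfolding W_def using adj_udiag[OF V_carrier] length_s by auto
  have "W * \<sigma> = udiag V (map (\<lambda>r. f r * r) s)"
    unfolding W_def sigma_eq using udiag_mult_map[OF V length_s, of f "\<lambda>r. r"] by simp
  hence "W * \<sigma> * W = udiag V (map (\<lambda>r. f r * r * f r) s)"
    unfolding W_def using udiag_mult_map[OF V length_s, of "\<lambda>r. f r * r" f] by simp
  hence "Re (mtr (W * \<rho> * W * \<sigma>)) = (\<Sum>b<n. f (s ! b) * s ! b * f (s ! b) * rho_diag_V b)"
    unfolding mtr_sandwich_cyclic(1)[OF rho_carrier sigma_carrier W(1)]
    using Re_mtr_rho_udiag_V length_s by simp
  moreover have "Re (mtr (W * \<rho> * W)) = (\<Sum>b<n. f (s ! b) * f (s ! b) * rho_diag_V b)"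
    unfolding mtr_sandwich_cyclic(2)[OF rho_carrier sigma_carrier W(1)]
    using udiag_mult_map[OF V length_s, of f f] Re_mtr_rho_udiag_V length_s unfolding W_def by simp
  moreover have "Re (mtr (\<rho> * W)) = (\<Sum>b<n. f (s ! b) * rho_diag_V b)"
    unfolding W_def using Re_mtr_rho_udiag_V length_s by simp
  moreover have "mtr (W * \<rho>) = mtr (\<rho> * W)"
    using W(1) by (intro mtr_mult_comm[of _ n n]) auto
  moreover have "t * (\<Sum>b<n. f (s ! b) * s ! b * f (s ! b) * rho_diag_V b) +
      (1 - t) * (\<Sum>b<n. f (s ! b) * f (s ! b) * rho_diag_V b) = (\<Sum>b<n. f (s ! b) * rho_diag_V b)"
  proof -
    have "t * (f (s ! b) * s ! b * f (s ! b) * rho_diag_V b) + (1 - t) * (f (s ! b) * f (s ! b) * rho_diag_V b)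
        = f (s ! b) * rho_diag_V b" if "b < n" for b
    proof -
      have "t * (f (s ! b) * s ! b * f (s ! b) * rho_diag_V b) + (1 - t) * (f (s ! b) * f (s ! b) * rho_diag_V b)
          = f (s ! b) * (f (s ! b) * (t * s ! b + 1 - t)) * rho_diag_V b"
        by (simp add: algebra_simps)
      thus ?thesis using f[OF that] by simp
    qed
    thus ?thesis by (simp add: sum_distrib_left sum.distrib[symmetric])
  qed
  ultimately show ?thesis
    using Phi_sandwich_trace_nonneg[OF W t] unfolding f_def by simp
qed

text \<open>Differentiate \<open>Tr[\<rho> ln(t\<sigma> + 1 - t)] - Tr[\<Phi>(\<rho>) ln(t\<rho> + 1 - t)]\<close> in \<open>t \<in> [0, 1]\<close>:
  the derivative is \<open>(Tr[\<Phi>(\<rho>) (t\<rho> + 1 - t)\<^sup>-\<^sup>1] - Tr[\<rho> (t\<sigma> + 1 - t)\<^sup>-\<^sup>1]) / t \<ge> 0\<close>.\<close>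

lemma trace_log_inequality:
  "Re (mtr (\<Phi> \<rho> * udiag U (map ln p))) \<le> Re (mtr (\<rho> * udiag V (map ln s)))"
proof -
  let ?F = "\<lambda>t. log_mix rho_diag_V (\<lambda>b. s ! b) n t - log_mix Phi_rho_diag (\<lambda>a. p ! a) n t"
  have "?F 0 \<le> ?F 1"
  proof (rule DERIV_nonneg_imp_increasing_open[of 0 1 ?F])
    fix t :: real assume t: "0 < t" "t < 1"
    have t0: "t \<noteq> 0" using t by simp
    have ys: "\<forall>b<n. t * s ! b + 1 - t > 0" using affine_mix_pos t s_pos by simp
    have xs: "\<forall>a<n. t * p ! a + 1 - t > 0" using affine_mix_pos t p_pos by simp
    have "(?F has_real_derivative (1 - (\<Sum>b<n. rho_diag_V b / (t * s ! b + 1 - t))) / t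
        - (1 - (\<Sum>a<n. Phi_rho_diag a / (t * p ! a + 1 - t))) / t) (at t)"
      using DERIV_diff[OF log_mix_has_derivative[OF ys, where w = rho_diag_V]
          log_mix_has_derivative[OF xs, where w = Phi_rho_diag]]
      unfolding log_mix_derivative_eq[OF ys t0 sum_rho_diag_V] log_mix_derivative_eq[OF xs t0 sum_Phi_rho_diag] .
    moreover have "(1 - (\<Sum>b<n. rho_diag_V b / (t * s ! b + 1 - t))) / t
        - (1 - (\<Sum>a<n. Phi_rho_diag a / (t * p ! a + 1 - t))) / t \<ge> 0"
      using choi_trace_inequality[of t] t by (simp add: diff_divide_distrib[symmetric])
    ultimately show "\<exists>y. (?F has_real_derivative y) (at t) \<and> 0 \<le> y" by blast
  next
    show "continuous_on {0..1} ?F"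
      using s_pos p_pos by (intro continuous_on_diff continuous_on_log_mix) auto
  qed simp
  moreover have "Re (mtr (\<Phi> \<rho> * udiag U (map ln p))) = (\<Sum>a<n. ln (p ! a) * Phi_rho_diag a)"
    using Re_mtr_Phi_rho_udiag_U[of "map ln p"] length_p by simp
  moreover have "Re (mtr (\<rho> * udiag V (map ln s))) = (\<Sum>b<n. ln (s ! b) * rho_diag_V b)"
    using Re_mtr_rho_udiag_V[of "map ln s"] length_s by simp
  ultimately show ?thesis by (simp add: mult.commute)
qed

lemma Re_mtr_rho_ln_scaled:
  assumes T: "T > 0"
  shows "Re (mtr (\<rho> * udiag V (map ln (map (\<lambda>x. x / T) s)))) = Re (mtr (\<rho> * udiag V (map ln s))) - ln T"
proof -
  have "Re (mtr (\<rho> * udiag V (map ln (map (\<lambda>x. x / T) s)))) = (\<Sum>b<n. ln (s ! b / T) * rho_diag_V b)"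
    using Re_mtr_rho_udiag_V[of "map ln (map (\<lambda>x. x / T) s)"] length_s by simp
  also have "\<dots> = (\<Sum>b<n. ln (s ! b) * rho_diag_V b - ln T * rho_diag_V b)"
  proof (intro sum.cong refl)
    fix b assume "b \<in> {..<n}"
    hence ln_b: "ln (s ! b / T) = ln (s ! b) - ln T" using s_pos T by (intro ln_divide_pos) auto
    show "ln (s ! b / T) * rho_diag_V b = ln (s ! b) * rho_diag_V b - ln T * rho_diag_V b"
      unfolding ln_b by (simp add: algebra_simps)
  qed
  also have "\<dots> = (\<Sum>b<n. ln (s ! b) * rho_diag_V b) - ln T * (\<Sum>b<n. rho_diag_V b)"
    by (simp add: sum_subtractf sum_distrib_left)
  also have "\<dots> = Re (mtr (\<rho> * udiag V (map ln s))) - ln T"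
    using Re_mtr_rho_udiag_V[of "map ln s"] length_s sum_rho_diag_V by simp
  finally show ?thesis .
qed

lemma Re_mtr_sigma: "Re (mtr \<sigma>) = sum_list s"
  unfolding sigma_eq mtr_udiag[OF V length_s] by simp

lemma normalized_s_distribution:
  "\<forall>b<n. map (\<lambda>x. x / sum_list s) s ! b > 0" "sum_list (map (\<lambda>x. x / sum_list s) s) = 1"
proof -
  have "s \<noteq> []" using sum_s_pos by auto
  moreover have "\<forall>i<length s. s ! i > 0" using s_pos length_s by simp
  ultimately show "\<forall>b<n. map (\<lambda>x. x / sum_list s) s ! b > 0" "sum_list (map (\<lambda>x. x / sum_list s) s) = 1"
    using normalized_list_pos length_s by auto
qed

lemma rel_ent_rho_sigma:
  "rel_ent \<rho> \<sigma> = ereal ((\<Sum>a<n. p ! a * ln (p ! a)) - Re (mtr (\<rho> * udiag V (map ln s))))"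
  unfolding sigma_eq unfolding \<rho>_def using s_pos
  by (intro rel_ent_udiag[OF U V length_p p_pos sum_p length_s]) auto

lemma rel_ent_rho_normalized_sigma:
  "rel_ent \<rho> ((1 / mtr \<sigma>) \<cdot>\<^sub>m \<sigma>) =
    ereal ((\<Sum>a<n. p ! a * ln (p ! a)) - Re (mtr (\<rho> * udiag V (map ln s))) + ln (Re (mtr \<sigma>)))"
proof -
  have "(1 / mtr \<sigma>) \<cdot>\<^sub>m \<sigma> = udiag V (map (\<lambda>x. x / sum_list s) s)"
    unfolding sigma_eq by (rule normalize_udiag[OF V length_s])
  thus ?thesis
    unfolding Re_mtr_sigma \<rho>_def
    using rel_ent_udiag[OF U V length_p p_pos sum_p _ normalized_s_distribution(1)] length_s
      Re_mtr_rho_ln_scaled[OF sum_s_pos, unfolded \<rho>_def]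
    by simp
qed

lemma klein_rho_normalized_sigma:
  "(\<Sum>a<n. p ! a * ln (p ! a)) - Re (mtr (\<rho> * udiag V (map ln s))) + ln (Re (mtr \<sigma>)) \<ge> 0"
  using klein_inequality[OF U V length_p p_pos sum_p _ normalized_s_distribution] length_s
    Re_mtr_rho_ln_scaled[OF sum_s_pos, unfolded \<rho>_def]
  unfolding Re_mtr_sigma \<rho>_def by simp

end

section \<open>Gibbs states\<close>

lemma gibbs_state_spectral:
  fixes \<beta> :: real
  assumes H: "hermitian n H" and n: "n > 0"
  obtains U l p c where "unitary n U" "length l = n" "H = udiag U l"
    "(1 / mtr (mat_fun (\<lambda>x. exp (- \<beta> * x)) H)) \<cdot>\<^sub>m mat_fun (\<lambda>x. exp (- \<beta> * x)) H = udiag U p"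
    "length p = n" "\<forall>a<n. p ! a > 0" "sum_list p = 1" "\<forall>a<n. ln (p ! a) = - \<beta> * l ! a - c"
proof -
  obtain U l where U: "unitary n U" and l: "length l = n" and H: "H = udiag U l"
    using hermitian_spectral[OF H] by blast
  define e where "e = map (\<lambda>x. exp (- \<beta> * x)) l"
  have e: "\<forall>i<length e. e ! i > 0" "e \<noteq> []" "length e = n" using l n by (auto simp: e_def)
  note p = normalized_list_pos[OF e(1,2)]
  have "(1 / mtr (mat_fun (\<lambda>x. exp (- \<beta> * x)) H)) \<cdot>\<^sub>m mat_fun (\<lambda>x. exp (- \<beta> * x)) H
      = udiag U (map (\<lambda>x. x / sum_list e) e)"
    unfolding H mat_fun_udiag[OF U l] e_def[symmetric] by (rule normalize_udiag[OF U e(3)])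
  moreover have "\<forall>a<n. ln (map (\<lambda>x. x / sum_list e) e ! a) = - \<beta> * l ! a - ln (sum_list e)"
    using p(1) l by (simp add: e_def ln_div)
  ultimately show ?thesis using U l H p(2,3) e(3) by (intro that) auto
qed

theorem mainTheorem5:
  fixes n :: nat and H :: "complex mat" and \<beta> :: real
    and \<Phi> \<Phi>d :: "complex mat \<Rightarrow> complex mat"
    and \<Gamma> \<gamma> :: "complex mat" and \<Delta> :: real
  assumes "n > 0" and "hermitian n H" and "\<beta> > 0"
    and "cptp n \<Phi>" and "trace_dual n \<Phi> \<Phi>d"
    and "\<Gamma> = (1 / mtr (mat_fun (\<lambda>x. exp (- \<beta> * x)) H)) \<cdot>\<^sub>m mat_fun (\<lambda>x. exp (- \<beta> * x)) H"
    and "\<Delta> = Re (mtr (\<Gamma> * H)) - Re (mtr (\<Phi> \<Gamma> * H))"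
    and "\<gamma> = (1 / mtr (\<Phi>d \<Gamma>)) \<cdot>\<^sub>m \<Phi>d \<Gamma>"
  shows "ereal \<Delta> \<le> - (ereal (1 / \<beta>) * rel_ent \<Gamma> (\<Phi>d \<Gamma>))
    \<and> - (ereal (1 / \<beta>) * rel_ent \<Gamma> (\<Phi>d \<Gamma>))
        = ereal (1 / \<beta>) * (ereal (ln (Re (mtr (\<Phi>d \<Gamma>)))) - rel_ent \<Gamma> \<gamma>)
    \<and> ereal (1 / \<beta>) * (ereal (ln (Re (mtr (\<Phi>d \<Gamma>)))) - rel_ent \<Gamma> \<gamma>)
        \<le> ereal (1 / \<beta>) * ereal (ln (Re (mtr (\<Phi>d \<Gamma>))))"
proof -
  obtain U l p c where U: "unitary n U" and l: "length l = n" and H: "H = udiag U l"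
    and \<Gamma>: "\<Gamma> = udiag U p" and p: "length p = n" "\<forall>a<n. p ! a > 0" "sum_list p = 1"
    and gibbs: "\<forall>a<n. ln (p ! a) = - \<beta> * l ! a - c"
    using gibbs_state_spectral[OF assms(2,1), of \<beta>] unfolding assms(6)[symmetric] by blast
  interpret channel_state n \<Phi> \<Phi>d U p
    by unfold_locales (use assms(4,5) U p in auto)
  have \<rho>: "\<Gamma> = \<rho>" unfolding \<rho>_def \<Gamma> ..
  obtain V s where V: "unitary n V" "length s = n" "\<sigma> = udiag V s"
    using hermitian_spectral[OF sigma_hermitian] by blast
  interpret channel_state_dual_eigen n \<Phi> \<Phi>d U p V s
    by unfold_locales (use V in auto)
  let ?A = "\<Sum>a<n. p ! a * ln (p ! a)"
  let ?X = "Re (mtr (\<Phi> \<rho> * udiag U (map ln p)))" and ?Y = "Re (mtr (\<rho> * udiag V (map ln s)))"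
  have "\<Delta> = (?X - ?A) / \<beta>"
    unfolding assms(7) H \<rho> using assms(3) l gibbs by (intro energy_drop_gibbs) auto
  moreover have "?X \<le> ?Y" by (rule trace_log_inequality)
  moreover have "?Y * \<beta> \<le> (?A + ln (Re (mtr \<sigma>))) * \<beta>"
    using klein_rho_normalized_sigma assms(3) by (intro mult_right_mono) auto
  ultimately show ?thesis
    unfolding assms(8) \<rho> \<sigma>_def[symmetric] rel_ent_rho_sigma rel_ent_rho_normalized_sigma
    using assms(3) by (simp add: field_simps)
qed

end
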